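(* Let $R$ be an integral domain. The following conditions are equivalent: (i) $R$ is an almost Krull domain satisfying the $t\#$-property; (ii) $R$ is an almost Krull domain satisfying the $t\#\#$-property; (iii) $R$ is a Krull domain.
   Context: $R$ is an integral domain with quotient field $K\neq R$. For a nonzero fractional ideal $I$, $I_v=(R:(R:I))$ where $(R:I)=\{x\in K: xI\subseteq R\}$, and $I_t=\bigcup\{J_v: J\subseteq I\text{ nonzero finitely generated}\}$; $I$ is a $t$-ideal if $I=I_t$; a $t$-prime is a prime $t$-ideal; $t\text{-Max}(R)$ is the set of ideals maximal among proper $t$-ideals. $R$ is almost Krull if $R_M$ is a rank-one discrete valuation domain for each $M\in t\text{-Max}(R)$. $R$ has the $t\#$-property if $\bigcap_{M\in\mathcal M_1}R_M\neq\bigcap_{M\in\mathcal M_2}R_M$ for any two distinct subsets $\mathcal M_1,\mathcal M_2$ of $t\text{-Max}(R)$. $R$ has the $t\#\#$-property if $\bigcap_{P\in\mathcal P_1}R_P\neq\bigcap_{P\in\mathcal P_2}R_P$ for any two distinct sets $\mathcal P_1,\mathcal P_2$ of pairwise incomparable $t$-prime ideals. *)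

theory Defs
  imports Main
begin

text \<open>An integral domain R is modelled as a subring of a field of type 'a
  whose fraction field is all of 'a (so K = UNIV).\<close>

definition subring :: "'a::field set \<Rightarrow> bool" where
  "subring R \<longleftrightarrow> 0 \<in> R \<and> 1 \<in> R \<and>
     (\<forall>x\<in>R. \<forall>y\<in>R. x + y \<in> R \<and> x - y \<in> R \<and> x * y \<in> R)"

definition quotient_field_is_UNIV :: "'a::field set \<Rightarrow> bool" where
  "quotient_field_is_UNIV R \<longleftrightarrow> (\<forall>x. \<exists>a\<in>R. \<exists>b\<in>R. b \<noteq> 0 \<and> x = a / b)"

definition colon :: "'a::field set \<Rightarrow> 'a set \<Rightarrow> 'a set" where
  "colon R I = {x. \<forall>y\<in>I. x * y \<in> R}"

definition v_op :: "'a::field set \<Rightarrow> 'a set \<Rightarrow> 'a set" where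
  "v_op R I = colon R (colon R I)"

definition ideal_of :: "'a::field set \<Rightarrow> 'a set \<Rightarrow> bool" where
  "ideal_of R I \<longleftrightarrow> I \<subseteq> R \<and> 0 \<in> I \<and> (\<forall>x\<in>I. \<forall>y\<in>I. x + y \<in> I) \<and>
     (\<forall>r\<in>R. \<forall>x\<in>I. r * x \<in> I)"

definition gen_by :: "'a::field set \<Rightarrow> 'a set \<Rightarrow> 'a set" where
  "gen_by R F = {\<Sum>a\<in>F. r a * a | r. \<forall>a\<in>F. r a \<in> R}"

definition fin_gen :: "'a::field set \<Rightarrow> 'a set \<Rightarrow> bool" where
  "fin_gen R J \<longleftrightarrow> (\<exists>F. finite F \<and> J = gen_by R F)"

definition t_op :: "'a::field set \<Rightarrow> 'a set \<Rightarrow> 'a set" where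
  "t_op R I = \<Union>{v_op R J | J. J \<subseteq> I \<and> J \<noteq> {0} \<and> fin_gen R J}"

definition t_ideal :: "'a::field set \<Rightarrow> 'a set \<Rightarrow> bool" where
  "t_ideal R I \<longleftrightarrow> ideal_of R I \<and> I \<noteq> {0} \<and> t_op R I = I"

definition prime_ideal_of :: "'a::field set \<Rightarrow> 'a set \<Rightarrow> bool" where
  "prime_ideal_of R P \<longleftrightarrow> ideal_of R P \<and> P \<noteq> R \<and>
     (\<forall>x\<in>R. \<forall>y\<in>R. x * y \<in> P \<longrightarrow> x \<in> P \<or> y \<in> P)"

definition t_prime :: "'a::field set \<Rightarrow> 'a set \<Rightarrow> bool" where
  "t_prime R P \<longleftrightarrow> prime_ideal_of R P \<and> t_ideal R P"

definition t_Max :: "'a::field set \<Rightarrow> 'a set set" where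
  "t_Max R = {M. t_ideal R M \<and> M \<noteq> R \<and>
       (\<forall>J. t_ideal R J \<and> J \<noteq> R \<and> M \<subseteq> J \<longrightarrow> J = M)}"

definition loc :: "'a::field set \<Rightarrow> 'a set \<Rightarrow> 'a set" where
  "loc R P = {a / s | a s. a \<in> R \<and> s \<in> R \<and> s \<notin> P}"

definition dvr :: "'a::field set \<Rightarrow> bool" where
  "dvr V \<longleftrightarrow> (\<exists>v :: 'a \<Rightarrow> int.
     (\<forall>x y. x \<noteq> 0 \<and> y \<noteq> 0 \<longrightarrow> v (x * y) = v x + v y) \<and>
     (\<forall>x y. x \<noteq> 0 \<and> y \<noteq> 0 \<and> x + y \<noteq> 0 \<longrightarrow> min (v x) (v y) \<le> v (x + y)) \<and>
     (\<exists>x. x \<noteq> 0 \<and> v x = 1) \<and>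
     V = {x. x = 0 \<or> 0 \<le> v x})"

definition almost_krull :: "'a::field set \<Rightarrow> bool" where
  "almost_krull R \<longleftrightarrow> (\<forall>M\<in>t_Max R. dvr (loc R M))"

definition t_sharp :: "'a::field set \<Rightarrow> bool" where
  "t_sharp R \<longleftrightarrow> (\<forall>M1 M2. M1 \<subseteq> t_Max R \<and> M2 \<subseteq> t_Max R \<and> M1 \<noteq> M2 \<longrightarrow>
      (\<Inter>M\<in>M1. loc R M) \<noteq> (\<Inter>M\<in>M2. loc R M))"

definition pairwise_incomparable :: "'a set set \<Rightarrow> bool" where
  "pairwise_incomparable S \<longleftrightarrow> (\<forall>P\<in>S. \<forall>Q\<in>S. P \<subseteq> Q \<longrightarrow> P = Q)"

definition t_sharp_sharp :: "'a::field set \<Rightarrow> bool" where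
  "t_sharp_sharp R \<longleftrightarrow> (\<forall>P1 P2.
      P1 \<subseteq> {P. t_prime R P} \<and> P2 \<subseteq> {P. t_prime R P} \<and>
      pairwise_incomparable P1 \<and> pairwise_incomparable P2 \<and> P1 \<noteq> P2 \<longrightarrow>
      (\<Inter>P\<in>P1. loc R P) \<noteq> (\<Inter>P\<in>P2. loc R P))"

text \<open>Krull domain (classical definition): R is the intersection of a family of
  rank-one DVRs of K with finite character (each nonzero x in R is a nonunit in
  only finitely many of them).\<close>
definition krull :: "'a::field set \<Rightarrow> bool" where
  "krull R \<longleftrightarrow> (\<exists>\<V>. (\<forall>V\<in>\<V>. dvr V) \<and> R = \<Inter>\<V> \<and>
      (\<forall>x\<in>R. x \<noteq> 0 \<longrightarrow> finite {V\<in>\<V>. inverse x \<notin> V}))"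

end

theory Submission
  imports Defs
begin

text \<open>
  If \<open>R\<^sub>M\<close> is a DVR, every nonzero prime contained in \<open>M\<close> equals \<open>M\<close>. So in an almost Krull
  domain the \<open>t\<close>-primes are exactly the \<open>t\<close>-maximal ideals, and t# and t## say the same.

  An almost Krull domain is the intersection of the DVRs \<open>R\<^sub>M\<close>, \<open>M\<close> \<open>t\<close>-maximal, so it is
  Krull once this family has finite character. If \<open>x \<noteq> 0\<close> lay in infinitely many
  \<open>t\<close>-maximal ideals, Zorn's lemma would give an ideal \<open>P \<ni> x\<close>, maximal such that each finite
  subset of \<open>P\<close> lies in infinitely many of them; \<open>P\<close> is a \<open>t\<close>-prime, hence \<open>t\<close>-maximal.
  By t# some \<open>y\<close> lies in every \<open>R\<^sub>N\<close>, \<open>N \<noteq> P\<close>, but not in \<open>R\<^sub>P\<close>. Then \<open>I + y I\<close>, where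
  \<open>I = (R :\<^sub>R y) \<subseteq> P\<close>, lies in no \<open>t\<close>-maximal ideal, so it contains a finite \<open>F\<close> with
  \<open>F\<^sub>v = R\<close>; the coefficients of \<open>F\<close> form a finite subset of \<open>P\<close> contained in no other
  \<open>t\<close>-maximal ideal, which contradicts the choice of \<open>P\<close>.

  Conversely, let \<open>R\<close> be the intersection of a family of DVRs with finite character. For
  \<open>x \<noteq> 0\<close> the ideals \<open>(R : S)\<close> with \<open>x \<in> S\<close> are described by finitely many valuation
  bounds, so there are finitely many of them; hence every \<open>t\<close>-maximal \<open>M\<close> is divisorial and
  some \<open>z \<in> (R : M)\<close> lies outside \<open>R\<close>. Such a \<open>z\<close> lies in every \<open>R\<^sub>N\<close>, \<open>N \<noteq> M\<close>, but
  not in \<open>R\<^sub>M\<close>, which is t#. Moreover some \<open>p \<in> M\<close> has \<open>z p \<notin> M\<close>, so \<open>p\<close> generates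
  \<open>M R\<^sub>M\<close>; comparing with a valuation of the family centred on \<open>M\<close> shows that \<open>R\<^sub>M\<close> is that
  valuation ring.
\<close>

text \<open>Of a discrete valuation only multiplicativity is ever used.\<close>

locale int_valuation =
  fixes v :: "'a::field \<Rightarrow> int"
  assumes val_mult: "x \<noteq> 0 \<Longrightarrow> y \<noteq> 0 \<Longrightarrow> v (x * y) = v x + v y"
begin

lemma val_one: "v 1 = 0"
  using val_mult[of 1 1] by simp

lemma val_inverse: "x \<noteq> 0 \<Longrightarrow> v (inverse x) = - v x"
  using val_mult[of x "inverse x"] val_one by simp

lemma val_divide: "x \<noteq> 0 \<Longrightarrow> y \<noteq> 0 \<Longrightarrow> v (x / y) = v x - v y"
  using val_mult[of x "inverse y"] val_inverse[of y] by (simp add: divide_inverse)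

lemma val_power: "x \<noteq> 0 \<Longrightarrow> v (x ^ n) = int n * v x"
  by (induction n) (simp_all add: val_one val_mult algebra_simps)

end

lemma dvrE:
  assumes "dvr V"
  obtains v :: "'a::field \<Rightarrow> int" where "int_valuation v" "V = {x. x = 0 \<or> 0 \<le> v x}"
  using assms unfolding dvr_def int_valuation_def by blast

lemma dvr_inverse_mem: assumes "dvr V" "x \<notin> V" shows "inverse x \<in> V"
proof -
  obtain v where v: "int_valuation v" "V = {x. x = 0 \<or> 0 \<le> v x}" using dvrE[OF assms(1)] .
  then show ?thesis using assms(2) int_valuation.val_inverse[OF v(1)] by force
qed

locale fraction_domain =
  fixes R :: "'a::field set"
  assumes subring: "subring R" and fractions: "quotient_field_is_UNIV R" and proper: "R \<noteq> UNIV"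
begin

lemma zero_mem [simp]: "0 \<in> R" and one_mem [simp]: "1 \<in> R"
  using subring by (auto simp: subring_def)

lemma add_mem [intro]: "x \<in> R \<Longrightarrow> y \<in> R \<Longrightarrow> x + y \<in> R"
  using subring by (auto simp: subring_def)

lemma mult_mem [intro]: "x \<in> R \<Longrightarrow> y \<in> R \<Longrightarrow> x * y \<in> R"
  using subring by (auto simp: subring_def)

lemma power_mem [intro]: "x \<in> R \<Longrightarrow> x ^ n \<in> R"
  by (induction n) auto

lemma sum_mem [intro]: "(\<And>a. a \<in> F \<Longrightarrow> f a \<in> R) \<Longrightarrow> sum f F \<in> R"
  by (induction F rule: infinite_finite_induct) auto

lemma obtain_fraction:
  obtains a b where "a \<in> R" "b \<in> R" "b \<noteq> 0" "x = a / b"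
  using fractions unfolding quotient_field_is_UNIV_def by blast

subsection \<open>Ideals\<close>

lemma ideal_subset: "ideal_of R I \<Longrightarrow> I \<subseteq> R"
  and ideal_zero: "ideal_of R I \<Longrightarrow> 0 \<in> I"
  and ideal_add: "ideal_of R I \<Longrightarrow> x \<in> I \<Longrightarrow> y \<in> I \<Longrightarrow> x + y \<in> I"
  and ideal_mult_left: "ideal_of R I \<Longrightarrow> r \<in> R \<Longrightarrow> x \<in> I \<Longrightarrow> r * x \<in> I"
  by (simp_all add: ideal_of_def)

lemma ideal_mult_right: "ideal_of R I \<Longrightarrow> r \<in> R \<Longrightarrow> x \<in> I \<Longrightarrow> x * r \<in> I"
  using ideal_mult_left[of I r x] by (simp add: mult.commute)

lemma ideal_sum: "ideal_of R I \<Longrightarrow> (\<And>a. a \<in> F \<Longrightarrow> f a \<in> I) \<Longrightarrow> sum f F \<in> I"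
  by (induction F rule: infinite_finite_induct) (simp_all add: ideal_zero ideal_add)

lemma ideal_eq_if_one_mem: "ideal_of R I \<Longrightarrow> 1 \<in> I \<Longrightarrow> I = R"
  using ideal_subset ideal_mult_right[of I _ 1] by fastforce

lemma ideal_nonzero_elem:
  assumes "ideal_of R I" "I \<noteq> {0}" obtains a where "a \<in> I" "a \<noteq> 0"
  using assms ideal_zero by blast

lemma ideal_zero_set: "ideal_of R {0}"
  unfolding ideal_of_def by simp

lemma ideal_Union_chain:
  assumes "C \<noteq> {}" "subset.chain \<A> C" "\<And>B. B \<in> C \<Longrightarrow> ideal_of R B"
  shows "ideal_of R (\<Union>C)"
  unfolding ideal_of_def
proof (intro conjI ballI)
  show "\<Union>C \<subseteq> R" "0 \<in> \<Union>C" using assms ideal_subset ideal_zero by blast+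
next
  fix x y assume "x \<in> \<Union>C" "y \<in> \<Union>C"
  then obtain B1 B2 where B: "B1 \<in> C" "B2 \<in> C" "x \<in> B1" "y \<in> B2" by blast
  with assms(2) have "B1 \<subseteq> B2 \<or> B2 \<subseteq> B1" unfolding subset.chain_def by blast
  with B assms(3) show "x + y \<in> \<Union>C" by (metis UnionI ideal_add subsetD)
next
  fix r x assume "r \<in> R" "x \<in> \<Union>C"
  with assms(3) show "r * x \<in> \<Union>C" using ideal_mult_left by blast
qed

definition ideal_adjoin :: "'a set \<Rightarrow> 'a \<Rightarrow> 'a set" where
  "ideal_adjoin A a = {p + r * a | p r. p \<in> A \<and> r \<in> R}"

lemma ideal_ideal_adjoin:
  assumes A: "ideal_of R A" and a: "a \<in> R" shows "ideal_of R (ideal_adjoin A a)"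
  unfolding ideal_of_def
proof (intro conjI ballI)
  show "ideal_adjoin A a \<subseteq> R" unfolding ideal_adjoin_def using ideal_subset[OF A] a by blast
  show "0 \<in> ideal_adjoin A a" unfolding ideal_adjoin_def using ideal_zero[OF A] by force
next
  fix x y assume "x \<in> ideal_adjoin A a" "y \<in> ideal_adjoin A a"
  then obtain p1 r1 p2 r2 where "p1 \<in> A" "r1 \<in> R" "x = p1 + r1 * a" "p2 \<in> A" "r2 \<in> R" "y = p2 + r2 * a"
    unfolding ideal_adjoin_def by blast
  moreover from this have "x + y = (p1 + p2) + (r1 + r2) * a" by (simp add: algebra_simps)
  ultimately show "x + y \<in> ideal_adjoin A a" unfolding ideal_adjoin_def using ideal_add[OF A] by blast
next
  fix s x assume s: "s \<in> R" and "x \<in> ideal_adjoin A a"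
  then obtain p r where "p \<in> A" "r \<in> R" "x = p + r * a" unfolding ideal_adjoin_def by blast
  moreover from this have "s * x = s * p + (s * r) * a" by (simp add: algebra_simps)
  ultimately show "s * x \<in> ideal_adjoin A a" unfolding ideal_adjoin_def using ideal_mult_left[OF A s] s by blast
qed

lemma subset_ideal_adjoin: "A \<subseteq> ideal_adjoin A a"
  unfolding ideal_adjoin_def by (force intro: exI[of _ 0])

lemma mem_ideal_adjoin: "ideal_of R A \<Longrightarrow> a \<in> ideal_adjoin A a"
  unfolding ideal_adjoin_def using ideal_zero by (force intro: exI[of _ 0] exI[of _ 1])

lemma mult_ideal_adjoin_mem:
  assumes M: "ideal_of R M" and ab: "a \<in> R" "b \<in> R" "a * b \<in> M"
    and fg: "f \<in> ideal_adjoin M a" "g \<in> ideal_adjoin M b"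
  shows "f * g \<in> M"
proof -
  obtain m r m' r' where mr: "m \<in> M" "r \<in> R" "f = m + r * a" "m' \<in> M" "r' \<in> R" "g = m' + r' * b"
    using fg unfolding ideal_adjoin_def by blast
  then have "g \<in> R" using ab ideal_subset[OF M] by blast
  then have "m * g \<in> M" "(r * a) * m' \<in> M" "(r * r') * (a * b) \<in> M"
    using mr ab ideal_mult_left[OF M] ideal_mult_right[OF M] by auto
  moreover have "f * g = m * g + (r * a) * m' + (r * r') * (a * b)"
    using mr by (simp add: algebra_simps)
  ultimately show ?thesis using ideal_add[OF M] by simp
qed

lemma finite_subset_ideal_adjoin:
  assumes "finite F" "F \<subseteq> ideal_adjoin A a"
  obtains E where "finite E" "E \<subseteq> A" "\<And>M. ideal_of R M \<Longrightarrow> E \<subseteq> M \<Longrightarrow> a \<in> M \<Longrightarrow> F \<subseteq> M"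
proof -
  have "\<forall>f\<in>F. \<exists>pr. fst pr \<in> A \<and> snd pr \<in> R \<and> f = fst pr + snd pr * a"
    using assms(2) unfolding ideal_adjoin_def by force
  then obtain c where c: "\<forall>f\<in>F. fst (c f) \<in> A \<and> snd (c f) \<in> R \<and> f = fst (c f) + snd (c f) * a"
    by (metis (no_types, lifting))
  show ?thesis
  proof
    show "finite ((fst \<circ> c) ` F)" "(fst \<circ> c) ` F \<subseteq> A" using assms(1) c by auto
    fix M assume M: "ideal_of R M" "(fst \<circ> c) ` F \<subseteq> M" "a \<in> M"
    show "F \<subseteq> M"
    proof
      fix f assume f: "f \<in> F"
      then have "fst (c f) \<in> M" "snd (c f) * a \<in> M" using M c ideal_mult_left by auto
      then show "f \<in> M" using c f ideal_add[OF M(1)] by metis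
    qed
  qed
qed

subsection \<open>The \<open>v\<close>- and \<open>t\<close>-operations\<close>

lemma mem_gen_by: assumes "finite F" "a \<in> F" shows "a \<in> gen_by R F"
proof -
  let ?r = "\<lambda>b. if b = a then (1::'a) else 0"
  have "(\<Sum>b\<in>F. ?r b * b) = (\<Sum>b\<in>F. if b = a then a else 0)"
    by (rule sum.cong) auto
  also have "\<dots> = a" using assms by simp
  finally have "(\<Sum>b\<in>F. ?r b * b) = a" .
  then show ?thesis unfolding gen_by_def by (intro CollectI exI[of _ ?r]) simp
qed

lemma subset_gen_by: "finite F \<Longrightarrow> F \<subseteq> gen_by R F"
  using mem_gen_by by blast

lemma gen_by_subset_ideal: "ideal_of R I \<Longrightarrow> F \<subseteq> I \<Longrightarrow> gen_by R F \<subseteq> I"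
  unfolding gen_by_def by (auto intro!: ideal_sum ideal_mult_left)

lemma gen_by_neq_zero: "finite F \<Longrightarrow> a \<in> F \<Longrightarrow> a \<noteq> 0 \<Longrightarrow> gen_by R F \<noteq> {0}"
  using mem_gen_by by blast

lemma nonzero_elem_if_gen_by_neq_zero:
  assumes "gen_by R F \<noteq> {0}" obtains a where "a \<in> F" "a \<noteq> 0"
proof -
  have "gen_by R F \<subseteq> {0}" if "F \<subseteq> {0}"
    using that unfolding gen_by_def by (auto intro!: sum.neutral)
  moreover have "0 \<in> gen_by R F"
    unfolding gen_by_def by (auto intro!: exI[of _ "\<lambda>_. 0"])
  ultimately show ?thesis using assms that by blast
qed

lemma colon_antimono: "A \<subseteq> B \<Longrightarrow> colon R B \<subseteq> colon R A"
  unfolding colon_def by auto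

lemma colon_gen_by: assumes "finite F" shows "colon R (gen_by R F) = colon R F"
proof
  show "colon R (gen_by R F) \<subseteq> colon R F" using colon_antimono subset_gen_by[OF assms] by blast
  show "colon R F \<subseteq> colon R (gen_by R F)"
  proof
    fix z assume z: "z \<in> colon R F"
    have "z * y \<in> R" if "y \<in> gen_by R F" for y
    proof -
      from that obtain r where r: "\<forall>a\<in>F. r a \<in> R" "y = (\<Sum>a\<in>F. r a * a)" unfolding gen_by_def by auto
      have "z * y = (\<Sum>a\<in>F. r a * (z * a))" unfolding r(2) by (simp add: sum_distrib_left algebra_simps)
      also have "\<dots> \<in> R" using r(1) z unfolding colon_def by blast
      finally show ?thesis .
    qed
    then show "z \<in> colon R (gen_by R F)" unfolding colon_def by auto
  qed
qed

lemma v_op_gen_by: "finite F \<Longrightarrow> v_op R (gen_by R F) = v_op R F"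
  by (simp add: v_op_def colon_gen_by)

lemma subset_v_op: "A \<subseteq> v_op R A"
  unfolding v_op_def colon_def by (auto simp: mult.commute)

lemma v_op_mono: "A \<subseteq> B \<Longrightarrow> v_op R A \<subseteq> v_op R B"
  unfolding v_op_def by (intro colon_antimono)

lemma colon_v_op: "colon R (v_op R A) = colon R A"
  using colon_antimono[OF subset_v_op] unfolding v_op_def colon_def by (auto simp: mult.commute)

lemma v_op_idem: "v_op R (v_op R A) = v_op R A"
  by (simp add: v_op_def colon_v_op[unfolded v_op_def])

lemma v_op_colon: "v_op R (colon R A) = colon R A"
  using colon_v_op[of A] by (simp add: v_op_def)

lemma colon_subset_R_if_one_mem: "1 \<in> A \<Longrightarrow> colon R A \<subseteq> R"
  unfolding colon_def by force

lemma v_op_subset_R: "A \<subseteq> R \<Longrightarrow> v_op R A \<subseteq> R"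
  unfolding v_op_def by (rule colon_subset_R_if_one_mem) (auto simp: colon_def)

lemma colon_R_R: "colon R R = R"
  using colon_subset_R_if_one_mem[of R] unfolding colon_def by auto

lemma colon_add: "x \<in> colon R A \<Longrightarrow> y \<in> colon R A \<Longrightarrow> x + y \<in> colon R A"
  unfolding colon_def by (auto simp: distrib_right)

lemma colon_mult_left: "r \<in> R \<Longrightarrow> x \<in> colon R A \<Longrightarrow> r * x \<in> colon R A"
  unfolding colon_def by (auto simp: mult.assoc)

lemma zero_mem_colon: "0 \<in> colon R A"
  unfolding colon_def by simp

lemma mem_colon_one_iff: "r \<in> colon R {1, y} \<longleftrightarrow> r \<in> R \<and> r * y \<in> R"
  unfolding colon_def by simp

lemma ideal_colon: "colon R A \<subseteq> R \<Longrightarrow> ideal_of R (colon R A)"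
  unfolding ideal_of_def using colon_add colon_mult_left by (auto simp: colon_def)

lemma nonzero_elem_if_one_mem_v_op:
  assumes "1 \<in> v_op R F" obtains a where "a \<in> F" "a \<noteq> 0"
proof -
  have "colon R F \<noteq> UNIV" using assms proper unfolding v_op_def colon_def by auto
  then show ?thesis using that unfolding colon_def by force
qed

lemma one_mem_v_op_times:
  assumes "1 \<in> v_op R F" "1 \<in> v_op R G"
  shows "1 \<in> v_op R {f * g | f g. f \<in> F \<and> g \<in> G}"
proof -
  have "w \<in> R" if w: "w \<in> colon R {f * g | f g. f \<in> F \<and> g \<in> G}" for w
  proof -
    have "w * f \<in> colon R G" if "f \<in> F" for f
      using w that unfolding colon_def by (auto simp: mult.assoc)
    then have "w * f \<in> R" if "f \<in> F" for f
      using assms(2) that unfolding v_op_def colon_def by fastforce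
    then show "w \<in> R" using assms(1) unfolding v_op_def colon_def by (simp add: mult.commute)
  qed
  then show ?thesis unfolding v_op_def colon_def by simp
qed

lemma mem_v_op_scaled:
  assumes "1 \<in> v_op R F" shows "s \<in> v_op R ((*) s ` F)"
proof -
  have "w * s \<in> colon R F" if "w \<in> colon R ((*) s ` F)" for w
    using that unfolding colon_def by (auto simp: mult.assoc)
  then show ?thesis using assms unfolding v_op_def colon_def by (fastforce simp: mult.commute)
qed

lemma mem_t_op_iff:
  "z \<in> t_op R A \<longleftrightarrow> (\<exists>F. finite F \<and> gen_by R F \<subseteq> A \<and> gen_by R F \<noteq> {0} \<and> z \<in> v_op R F)"
proof
  assume "z \<in> t_op R A"
  then obtain F where "finite F" "gen_by R F \<subseteq> A" "gen_by R F \<noteq> {0}" "z \<in> v_op R (gen_by R F)"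
    unfolding t_op_def fin_gen_def by blast
  then show "\<exists>F. finite F \<and> gen_by R F \<subseteq> A \<and> gen_by R F \<noteq> {0} \<and> z \<in> v_op R F"
    using v_op_gen_by by blast
next
  assume "\<exists>F. finite F \<and> gen_by R F \<subseteq> A \<and> gen_by R F \<noteq> {0} \<and> z \<in> v_op R F"
  then obtain F where "finite F" "gen_by R F \<subseteq> A" "gen_by R F \<noteq> {0}" "z \<in> v_op R (gen_by R F)"
    using v_op_gen_by by blast
  then show "z \<in> t_op R A" unfolding t_op_def fin_gen_def by blast
qed

lemma mem_t_op_if:
  assumes "ideal_of R A" "finite F" "F \<subseteq> A" "a \<in> F" "a \<noteq> 0" "z \<in> v_op R F"
  shows "z \<in> t_op R A"
  unfolding mem_t_op_iff
  using assms gen_by_subset_ideal[OF assms(1,3)] gen_by_neq_zero[OF assms(2,4,5)] by blast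

lemma mem_t_opE:
  assumes "z \<in> t_op R A"
  obtains F a where "finite F" "F \<subseteq> A" "a \<in> F" "a \<noteq> 0" "z \<in> v_op R F"
proof -
  obtain F where F: "finite F" "gen_by R F \<subseteq> A" "gen_by R F \<noteq> {0}" "z \<in> v_op R F"
    using assms unfolding mem_t_op_iff by blast
  moreover obtain a where "a \<in> F" "a \<noteq> 0" using nonzero_elem_if_gen_by_neq_zero[OF F(3)] .
  ultimately show ?thesis using that subset_gen_by[OF F(1)] by blast
qed

lemma subset_t_op: assumes "ideal_of R A" "A \<noteq> {0}" shows "A \<subseteq> t_op R A"
proof
  fix a assume a: "a \<in> A"
  obtain b where b: "b \<in> A" "b \<noteq> 0" using ideal_nonzero_elem[OF assms] .
  show "a \<in> t_op R A"
  proof (cases "a = 0")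
    case True
    then have "a \<in> v_op R {b}" unfolding v_op_def using zero_mem_colon by simp
    then show ?thesis using mem_t_op_if[OF assms(1), of "{b}" b] b by simp
  next
    case False
    then show ?thesis using mem_t_op_if[OF assms(1), of "{a}" a] a subset_v_op by auto
  qed
qed

lemma t_op_subset_v_op: "t_op R A \<subseteq> v_op R A"
proof
  fix z assume "z \<in> t_op R A"
  then obtain F a where "F \<subseteq> A" "z \<in> v_op R F" by (rule mem_t_opE)
  then show "z \<in> v_op R A" using v_op_mono by blast
qed

lemma ideal_t_op: assumes "ideal_of R A" "A \<noteq> {0}" shows "ideal_of R (t_op R A)"
  unfolding ideal_of_def
proof (intro conjI ballI)
  show "t_op R A \<subseteq> R" using t_op_subset_v_op v_op_subset_R ideal_subset[OF assms(1)] by blast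
  show "0 \<in> t_op R A" using subset_t_op[OF assms] ideal_zero[OF assms(1)] by blast
next
  fix x y assume "x \<in> t_op R A" "y \<in> t_op R A"
  then obtain F G a where F: "finite F" "F \<subseteq> A" "a \<in> F" "a \<noteq> 0" "x \<in> v_op R F"
    and G: "finite G" "G \<subseteq> A" "y \<in> v_op R G" by (metis mem_t_opE)
  have "x \<in> v_op R (F \<union> G)" "y \<in> v_op R (F \<union> G)"
    using v_op_mono[of F "F \<union> G"] v_op_mono[of G "F \<union> G"] F(5) G(3) by auto
  then have "x + y \<in> v_op R (F \<union> G)" unfolding v_op_def by (rule colon_add)
  then show "x + y \<in> t_op R A" using mem_t_op_if[OF assms(1), of "F \<union> G" a] F G by blast
next
  fix r x assume r: "r \<in> R" and "x \<in> t_op R A"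
  then obtain F a where F: "finite F" "F \<subseteq> A" "a \<in> F" "a \<noteq> 0" "x \<in> v_op R F" by (metis mem_t_opE)
  have "r * x \<in> v_op R F" using r F(5) unfolding v_op_def by (rule colon_mult_left)
  then show "r * x \<in> t_op R A" using mem_t_op_if[OF assms(1)] F by blast
qed

lemma t_op_idem: assumes "ideal_of R A" "A \<noteq> {0}" shows "t_op R (t_op R A) = t_op R A"
proof
  have ne: "t_op R A \<noteq> {0}" using subset_t_op[OF assms] assms(2) ideal_zero[OF assms(1)] by blast
  show "t_op R A \<subseteq> t_op R (t_op R A)" by (rule subset_t_op[OF ideal_t_op[OF assms] ne])
  show "t_op R (t_op R A) \<subseteq> t_op R A"
  proof
    fix z assume "z \<in> t_op R (t_op R A)"
    then obtain F a where F: "finite F" "F \<subseteq> t_op R A" "a \<in> F" "a \<noteq> 0" "z \<in> v_op R F"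
      by (rule mem_t_opE)
    have "\<exists>G. finite G \<and> G \<subseteq> A \<and> (\<exists>b\<in>G. b \<noteq> 0) \<and> f \<in> v_op R G" if "f \<in> F" for f
    proof -
      have "f \<in> t_op R A" using F(2) that by blast
      then obtain G b where "finite G" "G \<subseteq> A" "b \<in> G" "b \<noteq> 0" "f \<in> v_op R G"
        by (rule mem_t_opE)
      then show ?thesis by blast
    qed
    then obtain G where G: "\<And>f. f \<in> F \<Longrightarrow> finite (G f) \<and> G f \<subseteq> A \<and> (\<exists>b\<in>G f. b \<noteq> 0) \<and> f \<in> v_op R (G f)"
      by metis
    define H where "H = (\<Union>f\<in>F. G f)"
    have "F \<subseteq> v_op R H" unfolding H_def using G v_op_mono[of _ "\<Union>(G ` F)"] by blast
    then have "z \<in> v_op R H" using F(5) v_op_mono v_op_idem by blast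
    moreover obtain b where "b \<in> H" "b \<noteq> 0" using G[OF F(3)] F(3) unfolding H_def by blast
    moreover have "finite H" "H \<subseteq> A" unfolding H_def using F(1) G by auto
    ultimately show "z \<in> t_op R A" using mem_t_op_if[OF assms(1)] by blast
  qed
qed

lemma t_ideal_t_op: assumes "ideal_of R A" "A \<noteq> {0}" shows "t_ideal R (t_op R A)"
proof -
  have "t_op R A \<noteq> {0}" using subset_t_op[OF assms] assms(2) ideal_zero[OF assms(1)] by blast
  then show ?thesis unfolding t_ideal_def using ideal_t_op[OF assms] t_op_idem[OF assms] by blast
qed

lemma t_ideal_ideal: "t_ideal R I \<Longrightarrow> ideal_of R I"
  by (simp add: t_ideal_def)

lemma v_op_subset_t_ideal:
  assumes "t_ideal R I" "finite F" "F \<subseteq> I" "a \<in> F" "a \<noteq> 0"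
  shows "v_op R F \<subseteq> I"
proof
  fix z assume "z \<in> v_op R F"
  then have "z \<in> t_op R I" by (rule mem_t_op_if[OF t_ideal_ideal[OF assms(1)] assms(2-5)])
  then show "z \<in> I" using assms(1) unfolding t_ideal_def by blast
qed

subsection \<open>\<open>t\<close>-maximal ideals\<close>

lemma t_Max_t_ideal: "M \<in> t_Max R \<Longrightarrow> t_ideal R M"
  and t_Max_neq_R: "M \<in> t_Max R \<Longrightarrow> M \<noteq> R"
  and t_Max_maximal: "M \<in> t_Max R \<Longrightarrow> t_ideal R J \<Longrightarrow> J \<noteq> R \<Longrightarrow> M \<subseteq> J \<Longrightarrow> J = M"
  by (simp_all add: t_Max_def)

lemma t_Max_ideal: "M \<in> t_Max R \<Longrightarrow> ideal_of R M"
  using t_Max_t_ideal t_ideal_ideal by blast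

lemma t_Max_subset: "M \<in> t_Max R \<Longrightarrow> M \<subseteq> R"
  using t_Max_ideal ideal_subset by blast

lemma zero_mem_t_Max: "M \<in> t_Max R \<Longrightarrow> 0 \<in> M"
  using t_Max_ideal ideal_zero by blast

lemma one_notin_t_Max: "M \<in> t_Max R \<Longrightarrow> 1 \<notin> M"
  using t_Max_ideal t_Max_neq_R ideal_eq_if_one_mem by blast

lemma t_Max_nonzero_elem:
  assumes "M \<in> t_Max R" obtains x where "x \<in> M" "x \<noteq> 0"
  using assms t_Max_ideal t_Max_t_ideal ideal_nonzero_elem unfolding t_ideal_def by blast

lemma t_Max_incomparable: "M \<in> t_Max R \<Longrightarrow> N \<in> t_Max R \<Longrightarrow> M \<subseteq> N \<Longrightarrow> M = N"
  using t_Max_maximal[of M N] t_Max_t_ideal[of N] t_Max_neq_R[of N] by auto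

lemma t_ideal_Union_chain:
  assumes C: "C \<noteq> {}" "subset.chain \<A> C" and t: "\<And>B. B \<in> C \<Longrightarrow> t_ideal R B"
  shows "t_ideal R (\<Union>C)"
proof -
  have I: "ideal_of R (\<Union>C)" by (rule ideal_Union_chain[OF C t_ideal_ideal[OF t]])
  obtain B where "B \<in> C" using C(1) by blast
  then have "B \<noteq> {0}" "0 \<in> B" "B \<subseteq> \<Union>C" using t[of B] ideal_zero unfolding t_ideal_def by auto
  then have ne: "\<Union>C \<noteq> {0}" by blast
  have "t_op R (\<Union>C) \<subseteq> \<Union>C"
  proof
    fix z assume "z \<in> t_op R (\<Union>C)"
    then obtain F a where F: "finite F" "F \<subseteq> \<Union>C" "a \<in> F" "a \<noteq> 0" "z \<in> v_op R F"
      by (rule mem_t_opE)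
    obtain B where "B \<in> C" "F \<subseteq> B" using finite_subset_Union_chain[OF F(1,2) C] by blast
    then show "z \<in> \<Union>C" using v_op_subset_t_ideal[OF t F(1) _ F(3,4)] F(5) by blast
  qed
  then show ?thesis unfolding t_ideal_def using I ne subset_t_op[OF I ne] by blast
qed

lemma exists_t_Max_above:
  assumes "t_ideal R A" "A \<noteq> R" obtains M where "M \<in> t_Max R" "A \<subseteq> M"
proof -
  define \<A> where "\<A> = {B. t_ideal R B \<and> B \<noteq> R \<and> A \<subseteq> B}"
  have "\<exists>M\<in>\<A>. \<forall>X\<in>\<A>. M \<subseteq> X \<longrightarrow> X = M"
  proof (rule subset_Zorn_nonempty)
    show "\<A> \<noteq> {}" using assms unfolding \<A>_def by blast
  next
    fix C assume C: "C \<noteq> {}" "subset.chain \<A> C"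
    then have mem: "\<And>B. B \<in> C \<Longrightarrow> t_ideal R B \<and> B \<noteq> R \<and> A \<subseteq> B"
      unfolding subset.chain_def \<A>_def by blast
    have "1 \<notin> \<Union>C" using mem t_ideal_ideal ideal_eq_if_one_mem by blast
    then show "\<Union>C \<in> \<A>" unfolding \<A>_def using t_ideal_Union_chain[OF C] mem C(1) by auto
  qed
  then obtain M where "M \<in> \<A>" "\<forall>X\<in>\<A>. M \<subseteq> X \<longrightarrow> X = M" by blast
  then have "M \<in> t_Max R" "A \<subseteq> M" unfolding t_Max_def \<A>_def by blast+
  then show ?thesis using that by blast
qed

lemma one_mem_v_op_if_not_subset_t_Max:
  assumes A: "ideal_of R A" "A \<noteq> {0}" and not_sub: "\<And>M. M \<in> t_Max R \<Longrightarrow> \<not> A \<subseteq> M"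
  obtains F where "finite F" "F \<subseteq> A" "1 \<in> v_op R F"
proof -
  have "t_op R A = R"
  proof (rule ccontr)
    assume "t_op R A \<noteq> R"
    then obtain M where "M \<in> t_Max R" "t_op R A \<subseteq> M"
      using exists_t_Max_above[OF t_ideal_t_op[OF A]] by blast
    then show False using not_sub subset_t_op[OF A] by blast
  qed
  then show ?thesis using that mem_t_opE[of 1 A] by force
qed

lemma t_Max_prime: assumes M: "M \<in> t_Max R" shows "prime_ideal_of R M"
proof -
  have IM: "ideal_of R M" by (rule t_Max_ideal[OF M])
  have adjoin: "\<exists>F. finite F \<and> F \<subseteq> ideal_adjoin M a \<and> 1 \<in> v_op R F"
    if a: "a \<in> R" "a \<notin> M" for a
  proof -
    have "a \<in> ideal_adjoin M a" "a \<noteq> 0"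
      using mem_ideal_adjoin[OF IM] zero_mem_t_Max[OF M] a(2) by auto
    then have A: "ideal_of R (ideal_adjoin M a)" "ideal_adjoin M a \<noteq> {0}"
      using ideal_ideal_adjoin[OF IM a(1)] by auto
    have "\<not> ideal_adjoin M a \<subseteq> N" if N: "N \<in> t_Max R" for N
    proof
      assume sub: "ideal_adjoin M a \<subseteq> N"
      then have "M = N" using t_Max_incomparable[OF M N] subset_ideal_adjoin by blast
      then show False using sub mem_ideal_adjoin[OF IM] a(2) by blast
    qed
    then show ?thesis using one_mem_v_op_if_not_subset_t_Max[OF A] by metis
  qed
  have "a \<in> M \<or> b \<in> M" if ab: "a \<in> R" "b \<in> R" "a * b \<in> M" for a b
  proof (rule ccontr)
    assume "\<not> ?thesis"
    then obtain F G where F: "finite F" "F \<subseteq> ideal_adjoin M a" "1 \<in> v_op R F"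
      and G: "finite G" "G \<subseteq> ideal_adjoin M b" "1 \<in> v_op R G"
      using adjoin ab by meson
    define H where "H = {f * g | f g. f \<in> F \<and> g \<in> G}"
    have "finite H" unfolding H_def using F(1) G(1) by (intro finite_image_set2) simp_all
    moreover have "H \<subseteq> M" unfolding H_def using mult_ideal_adjoin_mem[OF IM ab] F(2) G(2) by blast
    moreover have "1 \<in> v_op R H" unfolding H_def by (rule one_mem_v_op_times[OF F(3) G(3)])
    moreover obtain h where "h \<in> H" "h \<noteq> 0" using nonzero_elem_if_one_mem_v_op calculation(3) .
    ultimately have "1 \<in> M" using v_op_subset_t_ideal[OF t_Max_t_ideal[OF M]] by blast
    then show False using one_notin_t_Max[OF M] by blast
  qed
  then show ?thesis unfolding prime_ideal_of_def using IM t_Max_neq_R[OF M] by blast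
qed

lemma t_Max_t_prime: "M \<in> t_Max R \<Longrightarrow> t_prime R M"
  unfolding t_prime_def using t_Max_prime t_Max_t_ideal by blast

subsection \<open>Localizations\<close>

lemma mem_locE:
  assumes "x \<in> loc R M" obtains a s where "a \<in> R" "s \<in> R" "s \<notin> M" "x = a / s"
  using assms unfolding loc_def by blast

lemma mem_locI: "a \<in> R \<Longrightarrow> s \<in> R \<Longrightarrow> s \<notin> M \<Longrightarrow> a / s \<in> loc R M"
  unfolding loc_def by blast

lemma R_subset_loc: "1 \<notin> M \<Longrightarrow> R \<subseteq> loc R M"
  using mem_locI[of _ 1 M] by force

lemma inverse_mem_loc: "s \<in> R \<Longrightarrow> s \<notin> M \<Longrightarrow> inverse s \<in> loc R M"
  using mem_locI[of 1 s M] by (simp add: divide_inverse)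

lemma inverse_notin_loc:
  assumes M: "ideal_of R M" and p: "p \<in> M" "p \<noteq> 0" shows "inverse p \<notin> loc R M"
proof
  assume "inverse p \<in> loc R M"
  then obtain c s where cs: "c \<in> R" "s \<in> R" "s \<notin> M" "inverse p = c / s" by (rule mem_locE)
  then have "s \<noteq> 0" using ideal_zero[OF M] by blast
  then have "s = p * c" using cs(4) p(2) by (simp add: field_simps)
  then show False using ideal_mult_right[OF M cs(1) p(1)] cs(3) by simp
qed

lemma loc_mult:
  assumes "prime_ideal_of R M" "x \<in> loc R M" "y \<in> loc R M" shows "x * y \<in> loc R M"
proof -
  obtain a s b t where "a \<in> R" "s \<in> R" "s \<notin> M" "x = a / s" "b \<in> R" "t \<in> R" "t \<notin> M" "y = b / t"
    using assms(2,3) by (meson mem_locE)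
  moreover from this have "s * t \<notin> M" using assms(1) unfolding prime_ideal_of_def by blast
  ultimately show ?thesis using mem_locI[of "a * b" "s * t" M] by auto
qed

lemma prime_ideal_mem_if_power_mem:
  assumes "prime_ideal_of R P" "x \<in> R" "x ^ n \<in> P" shows "x \<in> P"
  using assms(3)
proof (induction n)
  case 0
  then show ?case using assms(1) ideal_eq_if_one_mem unfolding prime_ideal_of_def by auto
next
  case (Suc n)
  then show ?case using assms(1,2) power_mem unfolding prime_ideal_of_def by auto
qed

lemma Inter_loc_t_Max: "(\<Inter>M\<in>t_Max R. loc R M) = R"
proof
  show "R \<subseteq> (\<Inter>M\<in>t_Max R. loc R M)" using R_subset_loc one_notin_t_Max by blast
  show "(\<Inter>M\<in>t_Max R. loc R M) \<subseteq> R"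
  proof
    fix x assume x: "x \<in> (\<Inter>M\<in>t_Max R. loc R M)"
    define C where "C = colon R {1, x}"
    have CR: "C \<subseteq> R" unfolding C_def by (simp add: colon_subset_R_if_one_mem)
    obtain a b where "a \<in> R" "b \<in> R" "b \<noteq> 0" "x = a / b" by (rule obtain_fraction)
    then have "b \<in> C" "b \<noteq> 0" unfolding C_def colon_def by auto
    then have C: "ideal_of R C" "C \<noteq> {0}" using ideal_colon CR unfolding C_def by auto
    have "\<not> C \<subseteq> M" if M: "M \<in> t_Max R" for M
    proof
      assume CM: "C \<subseteq> M"
      obtain c s where cs: "c \<in> R" "s \<in> R" "s \<notin> M" "x = c / s" using x M by (blast elim: mem_locE)
      then have "s \<noteq> 0" using zero_mem_t_Max[OF M] by blast
      then have "s \<in> C" using cs unfolding C_def colon_def by auto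
      then show False using CM cs(3) by blast
    qed
    then obtain F where "F \<subseteq> C" "1 \<in> v_op R F" using one_mem_v_op_if_not_subset_t_Max[OF C] by metis
    then have "1 \<in> C" using v_op_mono v_op_colon unfolding C_def by blast
    then show "x \<in> R" unfolding C_def colon_def by simp
  qed
qed

subsection \<open>Almost Krull domains\<close>

lemma val_pos_if_loc_eq:
  assumes M: "ideal_of R M" and v: "int_valuation v" and V: "loc R M = {x. x = 0 \<or> 0 \<le> v x}"
    and r: "r \<in> M" "r \<noteq> 0"
  shows "0 < v r"
  using inverse_notin_loc[OF M r] int_valuation.val_inverse[OF v r(2)] r(2) unfolding V by auto

lemma prime_eq_if_dvr_loc:
  assumes M: "prime_ideal_of R M" and V: "dvr (loc R M)"
    and P: "prime_ideal_of R P" "P \<noteq> {0}" "P \<subseteq> M"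
  shows "P = M"
proof
  have IM: "ideal_of R M" and IP: "ideal_of R P" using M P(1) unfolding prime_ideal_of_def by blast+
  obtain v where v: "int_valuation v" and Vv: "loc R M = {x. x = 0 \<or> 0 \<le> v x}"
    using dvrE[OF V] .
  interpret int_valuation v by (rule v)
  obtain p where p: "p \<in> P" "p \<noteq> 0" using ideal_nonzero_elem[OF IP P(2)] .
  have pR: "p \<in> R" using p IP ideal_subset by blast
  show "M \<subseteq> P"
  proof
    fix r assume r: "r \<in> M"
    show "r \<in> P"
    proof (cases "r = 0")
      case True
      then show ?thesis using ideal_zero[OF IP] by simp
    next
      case False
      define e f where "e = nat (v r)" and "f = nat (v p)"
      have pos: "0 < v r" "0 < v p" using val_pos_if_loc_eq[OF IM v Vv] r False p P(3) by blast+
      txt \<open>\<open>r\<^sup>f / p\<^sup>e\<close> is a unit of \<open>R\<^sub>M\<close>, so \<open>r\<^sup>f\<close> lies in \<open>p R\<^sub>M \<inter> R \<subseteq> P\<close>.\<close>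
      have "v (r ^ f / p ^ e) = 0"
        using pos False p(2) by (simp add: val_divide val_power e_def f_def)
      then have "r ^ f / p ^ e \<in> loc R M" unfolding Vv by simp
      then obtain c s where cs: "c \<in> R" "s \<in> R" "s \<notin> M" "r ^ f / p ^ e = c / s" by (rule mem_locE)
      then have "s \<noteq> 0" using ideal_zero[OF IM] by blast
      then have eq: "s * r ^ f = c * p ^ e" using cs(4) p(2) by (simp add: field_simps)
      have "p ^ e \<in> P"
        using pos ideal_mult_right[OF IP power_mem[OF pR] p(1), of "e - 1"]
        by (simp add: e_def power_eq_if mult.commute)
      then have "s * r ^ f \<in> P" unfolding eq using ideal_mult_left[OF IP cs(1)] by blast
      moreover have "s \<notin> P" "r \<in> R" using cs(3) P(3) r IM ideal_subset by blast+
      ultimately have "r ^ f \<in> P" using P(1) cs(2) power_mem unfolding prime_ideal_of_def by blast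
      then show ?thesis using prime_ideal_mem_if_power_mem[OF P(1) \<open>r \<in> R\<close>] by blast
    qed
  qed
qed (rule P(3))

lemma t_prime_mem_t_Max:
  assumes AK: "almost_krull R" and P: "t_prime R P" shows "P \<in> t_Max R"
proof -
  have Pp: "prime_ideal_of R P" and Pt: "t_ideal R P" using P unfolding t_prime_def by auto
  then obtain M where M: "M \<in> t_Max R" "P \<subseteq> M"
    using exists_t_Max_above unfolding prime_ideal_of_def by metis
  moreover have "P \<noteq> {0}" using Pt unfolding t_ideal_def by blast
  ultimately have "P = M"
    using prime_eq_if_dvr_loc[OF t_Max_prime[OF M(1)] _ Pp] AK unfolding almost_krull_def by blast
  then show ?thesis using M(1) by simp
qed

lemma almost_krull_t_sharp_iff_t_sharp_sharp:
  assumes AK: "almost_krull R" shows "t_sharp R \<longleftrightarrow> t_sharp_sharp R"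
proof -
  have "{P. t_prime R P} = t_Max R" using t_prime_mem_t_Max[OF AK] t_Max_t_prime by blast
  moreover have "pairwise_incomparable S" if "S \<subseteq> t_Max R" for S
    using that t_Max_incomparable unfolding pairwise_incomparable_def by blast
  ultimately show ?thesis unfolding t_sharp_def t_sharp_sharp_def by metis
qed

lemma Inter_loc_neq_if_separated:
  assumes "M \<in> A" "M \<notin> B" "B \<subseteq> t_Max R"
    and "\<forall>N\<in>t_Max R - {M}. y \<in> loc R N" "y \<notin> loc R M"
  shows "(\<Inter>N\<in>A. loc R N) \<noteq> (\<Inter>N\<in>B. loc R N)"
proof -
  have "y \<in> (\<Inter>N\<in>B. loc R N)" using assms(2-4) by blast
  moreover have "y \<notin> (\<Inter>N\<in>A. loc R N)" using assms(1,5) by blast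
  ultimately show ?thesis by metis
qed

lemma t_sharp_iff_separating:
  "t_sharp R \<longleftrightarrow> (\<forall>M\<in>t_Max R. \<exists>y. (\<forall>N\<in>t_Max R - {M}. y \<in> loc R N) \<and> y \<notin> loc R M)"
proof
  assume TS: "t_sharp R"
  show "\<forall>M\<in>t_Max R. \<exists>y. (\<forall>N\<in>t_Max R - {M}. y \<in> loc R N) \<and> y \<notin> loc R M"
  proof
    fix M assume "M \<in> t_Max R"
    then have "(\<Inter>N\<in>t_Max R - {M}. loc R N) \<noteq> (\<Inter>N\<in>t_Max R. loc R N)"
      using TS[unfolded t_sharp_def, rule_format, of "t_Max R - {M}" "t_Max R"] by blast
    moreover have "(\<Inter>N\<in>t_Max R. loc R N) \<subseteq> (\<Inter>N\<in>t_Max R - {M}. loc R N)" by blast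
    ultimately have "\<not> (\<Inter>N\<in>t_Max R - {M}. loc R N) \<subseteq> (\<Inter>N\<in>t_Max R. loc R N)" by blast
    then obtain y where "y \<in> (\<Inter>N\<in>t_Max R - {M}. loc R N)" "y \<notin> (\<Inter>N\<in>t_Max R. loc R N)"
      by blast
    then show "\<exists>y. (\<forall>N\<in>t_Max R - {M}. y \<in> loc R N) \<and> y \<notin> loc R M" by blast
  qed
next
  assume sep: "\<forall>M\<in>t_Max R. \<exists>y. (\<forall>N\<in>t_Max R - {M}. y \<in> loc R N) \<and> y \<notin> loc R M"
  have neq: "(\<Inter>N\<in>A. loc R N) \<noteq> (\<Inter>N\<in>B. loc R N)"
    if AB: "M \<in> A" "M \<notin> B" "A \<subseteq> t_Max R" "B \<subseteq> t_Max R" for A B M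
  proof -
    obtain y where "\<forall>N\<in>t_Max R - {M}. y \<in> loc R N" "y \<notin> loc R M" using sep AB(1,3) by blast
    then show ?thesis by (rule Inter_loc_neq_if_separated[OF AB(1,2,4)])
  qed
  show "t_sharp R" unfolding t_sharp_def
  proof (intro allI impI)
    fix M1 M2 assume M12: "M1 \<subseteq> t_Max R \<and> M2 \<subseteq> t_Max R \<and> M1 \<noteq> M2"
    show "(\<Inter>M\<in>M1. loc R M) \<noteq> (\<Inter>M\<in>M2. loc R M)"
    proof (cases "M1 \<subseteq> M2")
      case True
      then obtain M where "M \<in> M2" "M \<notin> M1" using M12 by blast
      then show ?thesis using neq[of M M2 M1] M12 by metis
    next
      case False
      then obtain M where "M \<in> M1" "M \<notin> M2" by blast
      then show ?thesis using neq[of M M1 M2] M12 by metis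
    qed
  qed
qed

lemma colon_t_Max_separating:
  assumes M: "M \<in> t_Max R" and z: "z \<in> colon R M" "z \<notin> R"
  shows "\<forall>N\<in>t_Max R - {M}. z \<in> loc R N" and "z \<notin> loc R M"
proof -
  show zN: "\<forall>N\<in>t_Max R - {M}. z \<in> loc R N"
  proof
    fix N assume N: "N \<in> t_Max R - {M}"
    then obtain m where m: "m \<in> M" "m \<notin> N" using t_Max_incomparable[OF M] by blast
    then have "m \<noteq> 0" "m \<in> R" using N zero_mem_t_Max t_Max_subset[OF M] by auto
    moreover have "z * m \<in> R" using z(1) m(1) unfolding colon_def by blast
    ultimately show "z \<in> loc R N" using mem_locI[of "z * m" m N] m(2) by simp
  qed
  show "z \<notin> loc R M" using zN z(2) M Inter_loc_t_Max by blast
qed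

subsection \<open>Finite character\<close>

definition infinitely_covered :: "'a set set \<Rightarrow> 'a set \<Rightarrow> bool" where
  "infinitely_covered T A \<longleftrightarrow> (\<forall>F. finite F \<and> F \<subseteq> A \<longrightarrow> infinite {M\<in>T. F \<subseteq> M})"

lemma exists_maximal_infinitely_covered:
  assumes T: "infinite T" "\<And>M. M \<in> T \<Longrightarrow> ideal_of R M \<and> x \<in> M" and x: "x \<in> R"
  obtains P where "ideal_of R P" "x \<in> P" "infinitely_covered T P"
    "\<And>Q. ideal_of R Q \<Longrightarrow> P \<subseteq> Q \<Longrightarrow> infinitely_covered T Q \<Longrightarrow> Q = P"
proof -
  define \<Phi> where "\<Phi> = {A. ideal_of R A \<and> x \<in> A \<and> infinitely_covered T A}"
  have "\<exists>P\<in>\<Phi>. \<forall>Q\<in>\<Phi>. P \<subseteq> Q \<longrightarrow> Q = P"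
  proof (rule subset_Zorn_nonempty)
    let ?Rx = "ideal_adjoin {0} x"
    have "infinitely_covered T ?Rx" unfolding infinitely_covered_def
    proof (intro allI impI)
      fix F assume "finite F \<and> F \<subseteq> ?Rx"
      then obtain E where "E \<subseteq> {0}" "\<And>M. ideal_of R M \<Longrightarrow> E \<subseteq> M \<Longrightarrow> x \<in> M \<Longrightarrow> F \<subseteq> M"
        using finite_subset_ideal_adjoin by metis
      then have "{M\<in>T. F \<subseteq> M} = T" using T(2) ideal_zero by blast
      then show "infinite {M\<in>T. F \<subseteq> M}" using T(1) by simp
    qed
    then have "?Rx \<in> \<Phi>"
      unfolding \<Phi>_def using ideal_ideal_adjoin[OF ideal_zero_set x] mem_ideal_adjoin[OF ideal_zero_set] by blast
    then show "\<Phi> \<noteq> {}" by blast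
  next
    fix C assume C: "C \<noteq> {}" "subset.chain \<Phi> C"
    then have mem: "\<And>B. B \<in> C \<Longrightarrow> ideal_of R B \<and> x \<in> B \<and> infinitely_covered T B"
      unfolding subset.chain_def \<Phi>_def by blast
    have "infinitely_covered T (\<Union>C)" unfolding infinitely_covered_def
    proof (intro allI impI)
      fix F assume "finite F \<and> F \<subseteq> \<Union>C"
      then obtain B where "B \<in> C" "F \<subseteq> B" using finite_subset_Union_chain[OF _ _ C] by blast
      then show "infinite {M\<in>T. F \<subseteq> M}" using mem \<open>finite F \<and> F \<subseteq> \<Union>C\<close>
        unfolding infinitely_covered_def by blast
    qed
    then show "\<Union>C \<in> \<Phi>" unfolding \<Phi>_def using ideal_Union_chain[OF C] mem C(1) by blast
  qed
  then obtain P where "P \<in> \<Phi>" "\<forall>Q\<in>\<Phi>. P \<subseteq> Q \<longrightarrow> Q = P" by blast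
  then show ?thesis using that unfolding \<Phi>_def by blast
qed

context
  fixes T :: "'a set set" and P :: "'a set"
  assumes T: "T \<subseteq> t_Max R"
    and P: "ideal_of R P" "infinitely_covered T P"
    and P_max: "\<And>Q. ideal_of R Q \<Longrightarrow> P \<subseteq> Q \<Longrightarrow> infinitely_covered T Q \<Longrightarrow> Q = P"
begin

lemma maximal_infinitely_covered_adjoin:
  assumes "a \<in> R" "a \<notin> P"
  obtains F where "finite F" "F \<subseteq> ideal_adjoin P a" "finite {M\<in>T. F \<subseteq> M}"
proof -
  have "ideal_adjoin P a \<noteq> P" using mem_ideal_adjoin[OF P(1)] assms(2) by blast
  then have "\<not> infinitely_covered T (ideal_adjoin P a)"
    using P_max ideal_ideal_adjoin[OF P(1) assms(1)] subset_ideal_adjoin by blast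
  then show ?thesis using that unfolding infinitely_covered_def by blast
qed

lemma maximal_infinitely_covered_prime: "prime_ideal_of R P"
proof -
  have "{M\<in>T. {1} \<subseteq> M} = {}" using T one_notin_t_Max by blast
  then have "1 \<notin> P" using P(2)[unfolded infinitely_covered_def, rule_format, of "{1}"]
    by (metis empty_subsetI finite.emptyI finite_insert insert_subset)
  moreover have "a \<in> P \<or> b \<in> P" if ab: "a \<in> R" "b \<in> R" "a * b \<in> P" for a b
  proof (rule ccontr)
    assume "\<not> ?thesis"
    then have "a \<notin> P" "b \<notin> P" by auto
    obtain F1 where F1: "finite F1" "F1 \<subseteq> ideal_adjoin P a" "finite {M\<in>T. F1 \<subseteq> M}"
      using maximal_infinitely_covered_adjoin[OF ab(1) \<open>a \<notin> P\<close>] .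
    obtain F2 where F2: "finite F2" "F2 \<subseteq> ideal_adjoin P b" "finite {M\<in>T. F2 \<subseteq> M}"
      using maximal_infinitely_covered_adjoin[OF ab(2) \<open>b \<notin> P\<close>] .
    obtain E1 where E1: "finite E1" "E1 \<subseteq> P" "\<And>M. ideal_of R M \<Longrightarrow> E1 \<subseteq> M \<Longrightarrow> a \<in> M \<Longrightarrow> F1 \<subseteq> M"
      using finite_subset_ideal_adjoin[OF F1(1,2)] by blast
    obtain E2 where E2: "finite E2" "E2 \<subseteq> P" "\<And>M. ideal_of R M \<Longrightarrow> E2 \<subseteq> M \<Longrightarrow> b \<in> M \<Longrightarrow> F2 \<subseteq> M"
      using finite_subset_ideal_adjoin[OF F2(1,2)] by blast
    define E where "E = insert (a * b) (E1 \<union> E2)"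
    have "{M\<in>T. E \<subseteq> M} \<subseteq> {M\<in>T. F1 \<subseteq> M} \<union> {M\<in>T. F2 \<subseteq> M}"
    proof
      fix M assume M: "M \<in> {M\<in>T. E \<subseteq> M}"
      then have MT: "M \<in> t_Max R" "a * b \<in> M" "E1 \<subseteq> M" "E2 \<subseteq> M" using T unfolding E_def by auto
      then have "a \<in> M \<or> b \<in> M" using t_Max_prime[OF MT(1)] ab(1,2) unfolding prime_ideal_of_def by blast
      then have "F1 \<subseteq> M \<or> F2 \<subseteq> M" using E1(3) E2(3) t_Max_ideal[OF MT(1)] MT(3,4) by blast
      then show "M \<in> {M\<in>T. F1 \<subseteq> M} \<union> {M\<in>T. F2 \<subseteq> M}" using M by blast
    qed
    then have "finite {M\<in>T. E \<subseteq> M}" using F1(3) F2(3) by (meson finite_UnI finite_subset)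
    moreover have "finite E" "E \<subseteq> P" unfolding E_def using E1 E2 ab(3) by auto
    ultimately show False using P(2) unfolding infinitely_covered_def by blast
  qed
  ultimately show ?thesis unfolding prime_ideal_of_def using P(1) by auto
qed

lemma maximal_infinitely_covered_t_ideal:
  assumes "P \<noteq> {0}" shows "t_ideal R P"
proof -
  have "z \<in> P" if "z \<in> t_op R P" for z
  proof -
    obtain F a where F: "finite F" "F \<subseteq> P" "a \<in> F" "a \<noteq> 0" "z \<in> v_op R F"
      using \<open>z \<in> t_op R P\<close> by (rule mem_t_opE)
    have z: "z \<in> R" using F(2,5) v_op_subset_R P(1) ideal_subset by blast
    txt \<open>Every \<open>t\<close>-maximal ideal containing \<open>F\<close> contains \<open>z\<close>, so adjoining \<open>z\<close> keeps \<open>P\<close> covered.\<close>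
    have "infinitely_covered T (ideal_adjoin P z)" unfolding infinitely_covered_def
    proof (intro allI impI)
      fix F' assume F': "finite F' \<and> F' \<subseteq> ideal_adjoin P z"
      then obtain E where E: "finite E" "E \<subseteq> P" "\<And>M. ideal_of R M \<Longrightarrow> E \<subseteq> M \<Longrightarrow> z \<in> M \<Longrightarrow> F' \<subseteq> M"
        using finite_subset_ideal_adjoin by metis
      have "{M\<in>T. F \<union> E \<subseteq> M} \<subseteq> {M\<in>T. F' \<subseteq> M}"
      proof
        fix M assume M: "M \<in> {M\<in>T. F \<union> E \<subseteq> M}"
        then have "M \<in> t_Max R" using T by blast
        then have "z \<in> M" using v_op_subset_t_ideal[OF t_Max_t_ideal F(1) _ F(3,4)] F(5) M by blast
        then show "M \<in> {M\<in>T. F' \<subseteq> M}" using E(3) M t_Max_ideal[OF \<open>M \<in> t_Max R\<close>] by blast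
      qed
      moreover have "infinite {M\<in>T. F \<union> E \<subseteq> M}"
        using P(2) F(1,2) E(1,2) unfolding infinitely_covered_def by blast
      ultimately show "infinite {M\<in>T. F' \<subseteq> M}" using infinite_super by blast
    qed
    then have "ideal_adjoin P z = P" using P_max ideal_ideal_adjoin[OF P(1) z] subset_ideal_adjoin by blast
    then show "z \<in> P" using mem_ideal_adjoin[OF P(1)] by blast
  qed
  then show ?thesis unfolding t_ideal_def using P(1) assms subset_t_op[OF P(1) assms] by blast
qed

end

lemma ideal_conductor_sum:
  assumes I: "ideal_of R I" and y: "\<And>g. g \<in> I \<Longrightarrow> y * g \<in> R"
  shows "ideal_of R {f + y * g | f g. f \<in> I \<and> g \<in> I}"
  unfolding ideal_of_def
proof (intro conjI ballI)
  show "{f + y * g | f g. f \<in> I \<and> g \<in> I} \<subseteq> R" using I ideal_subset y by blast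
  show "0 \<in> {f + y * g | f g. f \<in> I \<and> g \<in> I}" using ideal_zero[OF I] by force
next
  fix a b assume "a \<in> {f + y * g | f g. f \<in> I \<and> g \<in> I}" "b \<in> {f + y * g | f g. f \<in> I \<and> g \<in> I}"
  then obtain f g f' g' where "f \<in> I" "g \<in> I" "a = f + y * g" "f' \<in> I" "g' \<in> I" "b = f' + y * g'"
    by blast
  moreover from this have "a + b = (f + f') + y * (g + g')" by (simp add: algebra_simps)
  ultimately show "a + b \<in> {f + y * g | f g. f \<in> I \<and> g \<in> I}" using ideal_add[OF I] by blast
next
  fix r a assume r: "r \<in> R" and "a \<in> {f + y * g | f g. f \<in> I \<and> g \<in> I}"
  then obtain f g where "f \<in> I" "g \<in> I" "a = f + y * g" by blast
  moreover from this have "r * a = r * f + y * (r * g)" by (simp add: algebra_simps)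
  ultimately show "r * a \<in> {f + y * g | f g. f \<in> I \<and> g \<in> I}" using ideal_mult_left[OF I r] by blast
qed

lemma colon_one_subset_if_notin_loc:
  assumes P: "ideal_of R P" and y: "y \<notin> loc R P"
  shows "colon R {1, y} \<subseteq> P"
proof
  fix r assume r: "r \<in> colon R {1, y}"
  show "r \<in> P"
  proof (rule ccontr)
    assume "r \<notin> P"
    moreover have "r \<in> R" "r * y \<in> R" "r \<noteq> 0"
      using r mem_colon_one_iff ideal_zero[OF P] \<open>r \<notin> P\<close> by auto
    ultimately have "(r * y) / r \<in> loc R P" "r \<noteq> 0" using mem_locI by blast+
    then show False using y by simp
  qed
qed

lemma one_notin_v_op_if_subset_sum_scaled:
  assumes M: "M \<in> t_Max R" and y: "y \<in> loc R M" and F: "finite F"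
    and F_sub: "F \<subseteq> {f + y * g | f g. f \<in> M \<and> g \<in> M}"
  shows "1 \<notin> v_op R F"
proof
  assume F1: "1 \<in> v_op R F"
  obtain c s where cs: "c \<in> R" "s \<in> R" "s \<notin> M" "y = c / s" using y by (rule mem_locE)
  then have s: "s \<noteq> 0" "s * y = c" using zero_mem_t_Max[OF M] by auto
  txt \<open>Clearing the denominator of \<open>y\<close> pushes \<open>s F\<close> into \<open>M\<close>, while \<open>s \<in> (s F)\<^sub>v\<close>.\<close>
  have "s * h \<in> M" if h: "h \<in> F" for h
  proof -
    obtain f g where fg: "f \<in> M" "g \<in> M" "h = f + y * g" using F_sub h by blast
    then have "s * h = s * f + c * g" using s(2) by (metis distrib_left mult.assoc)
    then show ?thesis using fg cs(1,2) ideal_add ideal_mult_left t_Max_ideal[OF M] by metis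
  qed
  moreover obtain h where "h \<in> F" "h \<noteq> 0" using nonzero_elem_if_one_mem_v_op[OF F1] .
  ultimately have "v_op R ((*) s ` F) \<subseteq> M"
    using v_op_subset_t_ideal[OF t_Max_t_ideal[OF M], of "(*) s ` F" "s * h"] F s(1) by auto
  then show False using mem_v_op_scaled[OF F1] cs(3) by blast
qed

context
  fixes P y
  assumes AK: "almost_krull R" and P: "P \<in> t_Max R"
    and yN: "\<And>N. N \<in> t_Max R \<Longrightarrow> N \<noteq> P \<Longrightarrow> y \<in> loc R N" and yP: "y \<notin> loc R P"
begin

lemma conductor_sum_not_subset_t_Max:
  assumes N: "N \<in> t_Max R"
  shows "\<not> {f + y * g | f g. f \<in> colon R {1, y} \<and> g \<in> colon R {1, y}} \<subseteq> N"
    (is "\<not> ?B \<subseteq> N")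
proof -
  have I_B: "f \<in> ?B" "y * f \<in> ?B" if "f \<in> colon R {1, y}" for f
    using that zero_mem_colon by force+
  show ?thesis
  proof (cases "N = P")
    case False
    then obtain c s where cs: "c \<in> R" "s \<in> R" "s \<notin> N" "y = c / s"
      using yN[OF N] by (blast elim: mem_locE)
    then have "s \<noteq> 0" using zero_mem_t_Max[OF N] by blast
    then have "s \<in> colon R {1, y}" using cs mem_colon_one_iff by simp
    then show ?thesis using I_B(1) cs(3) by blast
  next
    case True
    have "inverse y \<in> loc R P" using AK P yP dvr_inverse_mem unfolding almost_krull_def by blast
    then obtain c s where cs: "c \<in> R" "s \<in> R" "s \<notin> P" "inverse y = c / s" by (rule mem_locE)
    have "y \<noteq> 0" using yP R_subset_loc[OF one_notin_t_Max[OF P]] by auto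
    moreover have "s \<noteq> 0" using cs(3) zero_mem_t_Max[OF P] by blast
    ultimately have "y * c = s" using cs(4) by (simp add: field_simps)
    then have "s \<in> ?B" using I_B(2)[of c] cs mem_colon_one_iff by (auto simp: mult.commute)
    then show ?thesis using cs(3) True by blast
  qed
qed

text \<open>The finite set consists of the coefficients of a finite \<open>v\<close>-generating set of
  \<open>I + y I\<close>, \<open>I = (R :\<^sub>R y)\<close>.\<close>

lemma finite_subset_avoiding_other_t_Max:
  obtains E where "finite E" "E \<subseteq> P" "\<And>M. M \<in> t_Max R \<Longrightarrow> M \<noteq> P \<Longrightarrow> \<not> E \<subseteq> M"
proof -
  define I where "I = colon R {1, y}"
  define B where "B = {f + y * g | f g. f \<in> I \<and> g \<in> I}"
  have I: "ideal_of R I" unfolding I_def by (rule ideal_colon[OF colon_subset_R_if_one_mem]) simp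
  have B: "ideal_of R B"
    unfolding B_def by (rule ideal_conductor_sum[OF I]) (simp add: I_def mem_colon_one_iff mult.commute)
  obtain a b where ab: "a \<in> R" "b \<in> R" "b \<noteq> 0" "y = a / b" by (rule obtain_fraction)
  then have "b \<in> I" unfolding I_def using mem_colon_one_iff by simp
  then have "b + y * 0 \<in> B" unfolding B_def using zero_mem_colon[of "{1, y}"] I_def by blast
  then have "B \<noteq> {0}" using ab(3) by auto
  moreover have "\<not> B \<subseteq> M" if "M \<in> t_Max R" for M
    unfolding B_def I_def using conductor_sum_not_subset_t_Max[OF that] .
  ultimately obtain F where F: "finite F" "F \<subseteq> B" "1 \<in> v_op R F"
    using one_mem_v_op_if_not_subset_t_Max[OF B] by blast
  have "\<forall>h\<in>F. \<exists>fg. fst fg \<in> I \<and> snd fg \<in> I \<and> h = fst fg + y * snd fg"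
    using F(2) unfolding B_def by force
  then obtain c where c: "\<And>h. h \<in> F \<Longrightarrow> fst (c h) \<in> I \<and> snd (c h) \<in> I \<and> h = fst (c h) + y * snd (c h)"
    by metis
  show ?thesis
  proof
    let ?E = "fst ` c ` F \<union> snd ` c ` F"
    show "finite ?E" using F(1) by auto
    show "?E \<subseteq> P"
      using c colon_one_subset_if_notin_loc[OF t_Max_ideal[OF P] yP] unfolding I_def by auto
    fix M assume M: "M \<in> t_Max R" "M \<noteq> P"
    show "\<not> ?E \<subseteq> M"
    proof
      assume "?E \<subseteq> M"
      then have "F \<subseteq> {f + y * g | f g. f \<in> M \<and> g \<in> M}" using c by blast
      then show False using one_notin_v_op_if_subset_sum_scaled[OF M(1) yN[OF M] F(1)] F(3) by blast
    qed
  qed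
qed

end

lemma finite_t_Max_containing:
  assumes AK: "almost_krull R" and TS: "t_sharp R" and x: "x \<in> R" "x \<noteq> 0"
  shows "finite {M \<in> t_Max R. x \<in> M}"
proof (rule ccontr)
  define T where "T = {M \<in> t_Max R. x \<in> M}"
  assume "infinite {M \<in> t_Max R. x \<in> M}"
  then obtain P where P: "ideal_of R P" "x \<in> P" "infinitely_covered T P"
    and P_max: "\<And>Q. ideal_of R Q \<Longrightarrow> P \<subseteq> Q \<Longrightarrow> infinitely_covered T Q \<Longrightarrow> Q = P"
    using exists_maximal_infinitely_covered[of T x] x(1) t_Max_ideal unfolding T_def by blast
  have T: "T \<subseteq> t_Max R" unfolding T_def by blast
  have "P \<noteq> {0}" using P(2) x(2) by blast
  then have "t_prime R P" unfolding t_prime_def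
    using maximal_infinitely_covered_prime[OF T P(1,3) P_max]
      maximal_infinitely_covered_t_ideal[OF T P(1,3) P_max] by blast
  then have PM: "P \<in> t_Max R" by (rule t_prime_mem_t_Max[OF AK])
  then obtain y where y: "\<forall>N\<in>t_Max R - {P}. y \<in> loc R N" "y \<notin> loc R P"
    using bspec[OF TS[unfolded t_sharp_iff_separating] PM] by blast
  obtain E where E: "finite E" "E \<subseteq> P" "\<And>M. M \<in> t_Max R \<Longrightarrow> M \<noteq> P \<Longrightarrow> \<not> E \<subseteq> M"
    using finite_subset_avoiding_other_t_Max[OF AK PM _ y(2)] y(1) by blast
  then have "infinite ({M\<in>T. E \<subseteq> M} - {P})" using P(3) unfolding infinitely_covered_def by simp
  then obtain M where "M \<in> T" "E \<subseteq> M" "M \<noteq> P" using infinite_imp_nonempty by blast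
  then show False using E(3) T by blast
qed

lemma almost_krull_t_sharp_imp_krull:
  assumes AK: "almost_krull R" and TS: "t_sharp R" shows "krull R"
  unfolding krull_def
proof (intro exI[of _ "loc R ` t_Max R"] conjI ballI impI)
  show "\<And>V. V \<in> loc R ` t_Max R \<Longrightarrow> dvr V" using AK unfolding almost_krull_def by blast
  show "R = \<Inter> (loc R ` t_Max R)" using Inter_loc_t_Max by simp
next
  fix x assume x: "x \<in> R" "x \<noteq> 0"
  have "{V \<in> loc R ` t_Max R. inverse x \<notin> V} \<subseteq> loc R ` {M \<in> t_Max R. x \<in> M}"
    using inverse_mem_loc x(1) by blast
  then show "finite {V \<in> loc R ` t_Max R. inverse x \<notin> V}"
    using finite_t_Max_containing[OF AK TS x] by (meson finite_imageI finite_subset)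
qed

end

subsection \<open>Krull domains\<close>

locale krull_family = fraction_domain +
  fixes Vs :: "'a set set" and val :: "'a set \<Rightarrow> 'a \<Rightarrow> int"
  assumes dvr_V: "V \<in> Vs \<Longrightarrow> dvr V"
    and val: "V \<in> Vs \<Longrightarrow> int_valuation (val V)"
    and V_eq: "V \<in> Vs \<Longrightarrow> V = {x. x = 0 \<or> 0 \<le> val V x}"
    and R_eq: "R = \<Inter>Vs"
    and finite_character: "x \<in> R \<Longrightarrow> x \<noteq> 0 \<Longrightarrow> finite {V\<in>Vs. inverse x \<notin> V}"
begin

lemma mem_V_iff: "V \<in> Vs \<Longrightarrow> z \<in> V \<longleftrightarrow> z = 0 \<or> 0 \<le> val V z"
  using V_eq by blast

lemma zero_mem_V: "V \<in> Vs \<Longrightarrow> 0 \<in> V"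
  using mem_V_iff by blast

lemma R_subset_V: "V \<in> Vs \<Longrightarrow> R \<subseteq> V"
  using R_eq by blast

lemma mem_R_if_mem_V: "(\<And>V. V \<in> Vs \<Longrightarrow> z \<in> V) \<Longrightarrow> z \<in> R"
  using R_eq by blast

lemma val_nonneg: "V \<in> Vs \<Longrightarrow> r \<in> R \<Longrightarrow> r \<noteq> 0 \<Longrightarrow> 0 \<le> val V r"
  using R_subset_V mem_V_iff by blast

lemma val_mult: "V \<in> Vs \<Longrightarrow> x \<noteq> 0 \<Longrightarrow> y \<noteq> 0 \<Longrightarrow> val V (x * y) = val V x + val V y"
  using val int_valuation.val_mult by blast

lemma V_mult: assumes V: "V \<in> Vs" and "a \<in> V" "b \<in> V" shows "a * b \<in> V"
  using assms val_mult[OF V, of a b] mem_V_iff[OF V] by (cases "a = 0 \<or> b = 0") auto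

lemma val_pos_if_inverse_notin:
  assumes V: "V \<in> Vs" and "inverse x \<notin> V" shows "x \<noteq> 0" "0 < val V x"
  using assms zero_mem_V[OF V] mem_V_iff[OF V] int_valuation.val_inverse[OF val[OF V], of x] by auto

definition min_val :: "'a set \<Rightarrow> 'a set \<Rightarrow> nat" where
  "min_val S V = (LEAST n. \<exists>s\<in>S. s \<noteq> 0 \<and> val V s = int n)"

context
  fixes S V x
  assumes V: "V \<in> Vs" and S: "S \<subseteq> R" "x \<in> S" "x \<noteq> 0"
begin

lemma min_val_attained: obtains s where "s \<in> S" "s \<noteq> 0" "val V s = int (min_val S V)"
proof -
  have "\<exists>n. \<exists>s\<in>S. s \<noteq> 0 \<and> val V s = int n"
    using S val_nonneg[OF V, of x] by (intro exI[of _ "nat (val V x)"] bexI[of _ x]) auto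
  then have "\<exists>s\<in>S. s \<noteq> 0 \<and> val V s = int (min_val S V)"
    unfolding min_val_def by (rule LeastI_ex)
  then show ?thesis using that by blast
qed

lemma min_val_le: "s \<in> S \<Longrightarrow> s \<noteq> 0 \<Longrightarrow> int (min_val S V) \<le> val V s"
proof -
  assume s: "s \<in> S" "s \<noteq> 0"
  then have "0 \<le> val V s" using val_nonneg[OF V] S(1) by blast
  then have "min_val S V \<le> nat (val V s)"
    unfolding min_val_def using s by (intro Least_le) auto
  then show ?thesis using \<open>0 \<le> val V s\<close> by linarith
qed

end

definition val_bounded :: "'a \<Rightarrow> ('a set \<Rightarrow> nat) \<Rightarrow> 'a set" where
  "val_bounded x f = {z. (\<forall>V\<in>Vs. inverse x \<in> V \<longrightarrow> z \<in> V) \<and>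
     (\<forall>V\<in>Vs. inverse x \<notin> V \<longrightarrow> z = 0 \<or> 0 \<le> val V z + int (f V))}"

lemma val_bounded_cong:
  "(\<And>V. V \<in> Vs \<Longrightarrow> inverse x \<notin> V \<Longrightarrow> f V = g V) \<Longrightarrow> val_bounded x f = val_bounded x g"
  unfolding val_bounded_def by auto

lemma colon_subset_val_bounded:
  assumes S: "S \<subseteq> R" "x \<in> S" "x \<noteq> 0"
  shows "colon R S \<subseteq> val_bounded x (min_val S)"
proof
  fix z assume z: "z \<in> colon R S"
  have zs: "z * s \<in> V" if "s \<in> S" "V \<in> Vs" for s V
    using z that R_eq unfolding colon_def by blast
  show "z \<in> val_bounded x (min_val S)" unfolding val_bounded_def
  proof (intro CollectI conjI ballI impI)
    fix V assume V: "V \<in> Vs" "inverse x \<in> V"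
    then have "(z * x) * inverse x \<in> V" using zs[OF S(2)] V_mult by blast
    then show "z \<in> V" using S(3) by (simp add: mult.assoc)
  next
    fix V assume V: "V \<in> Vs" "inverse x \<notin> V"
    show "z = 0 \<or> 0 \<le> val V z + int (min_val S V)"
    proof (cases "z = 0")
      case False
      obtain s where s: "s \<in> S" "s \<noteq> 0" "val V s = int (min_val S V)"
        using min_val_attained[OF V(1) S] .
      then have "0 \<le> val V (z * s)" using zs[OF s(1) V(1)] mem_V_iff[OF V(1)] False by simp
      then show ?thesis using val_mult[OF V(1) False s(2)] s(3) by simp
    qed simp
  qed
qed

lemma val_bounded_subset_colon:
  assumes S: "S \<subseteq> R" "x \<in> S" "x \<noteq> 0"
  shows "val_bounded x (min_val S) \<subseteq> colon R S"
proof
  fix z assume z: "z \<in> val_bounded x (min_val S)"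
  have zs: "z * s \<in> V" if s: "s \<in> S" "s \<noteq> 0" and V: "V \<in> Vs" and z0: "z \<noteq> 0" for s V
  proof (cases "inverse x \<in> V")
    case True
    then have "z \<in> V" using z V unfolding val_bounded_def by blast
    moreover have "s \<in> V" using s S(1) R_subset_V[OF V] by blast
    ultimately show ?thesis by (rule V_mult[OF V])
  next
    case False
    then have "0 \<le> val V z + int (min_val S V)" using z V z0 unfolding val_bounded_def by blast
    moreover have "int (min_val S V) \<le> val V s" by (rule min_val_le[OF V S s])
    ultimately show ?thesis using val_mult[OF V z0 s(2)] mem_V_iff[OF V] by simp
  qed
  have "z * s \<in> R" if s: "s \<in> S" for s
  proof (rule mem_R_if_mem_V)
    fix V assume V: "V \<in> Vs"
    show "z * s \<in> V"
    proof (cases "z = 0 \<or> s = 0")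
      case True
      then show ?thesis using zero_mem_V[OF V] by auto
    qed (use zs s V in auto)
  qed
  then show "z \<in> colon R S" unfolding colon_def by blast
qed

lemma finite_colons_containing:
  assumes x: "x \<in> R" "x \<noteq> 0"
  shows "finite {colon R S | S. S \<subseteq> R \<and> x \<in> S}"
proof -
  define W where "W = {V\<in>Vs. inverse x \<notin> V}"
  define B where "B = (\<Union>V\<in>W. {0..nat (val V x)})"
  define Fs where "Fs = {f. \<forall>V. (V \<in> W \<longrightarrow> f V \<in> B) \<and> (V \<notin> W \<longrightarrow> f V = (0::nat))}"
  have "finite W" unfolding W_def using finite_character[OF x] .
  then have "finite Fs" unfolding Fs_def B_def by (intro finite_set_of_finite_funs) auto
  moreover have "{colon R S | S. S \<subseteq> R \<and> x \<in> S} \<subseteq> val_bounded x ` Fs"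
  proof
    fix C assume "C \<in> {colon R S | S. S \<subseteq> R \<and> x \<in> S}"
    then obtain S where S: "S \<subseteq> R" "x \<in> S" "C = colon R S" by blast
    define f where "f = (\<lambda>V. if V \<in> W then min_val S V else 0)"
    have "C = val_bounded x (min_val S)"
      using S colon_subset_val_bounded val_bounded_subset_colon x(2) by blast
    also have "\<dots> = val_bounded x f" unfolding f_def W_def by (rule val_bounded_cong) simp
    finally have "C = val_bounded x f" .
    moreover have "f \<in> Fs" unfolding Fs_def
    proof (intro CollectI allI conjI impI)
      fix V assume V: "V \<in> W"
      then have "int (min_val S V) \<le> val V x"
        using min_val_le[OF _ S(1,2) x(2) S(2) x(2)] unfolding W_def by blast
      then have "min_val S V \<in> {0..nat (val V x)}" by simp
      then show "f V \<in> B" unfolding B_def f_def using V by auto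
    qed (simp add: f_def)
    ultimately show "C \<in> val_bounded x ` Fs" by blast
  qed
  ultimately show ?thesis using finite_subset by blast
qed

text \<open>Finitely many divisorial ideals \<open>F\<^sub>v\<close> with \<open>x \<in> F \<subseteq> M\<close> cover \<open>M = M\<^sub>t\<close>, so \<open>M\<close>
  is the divisorial ideal of a single finite set.\<close>

lemma t_Max_divisorial: assumes M: "M \<in> t_Max R" shows "v_op R M = M"
proof -
  obtain x where x: "x \<in> M" "x \<noteq> 0" using t_Max_nonzero_elem[OF M] .
  have xR: "x \<in> R" using x t_Max_subset[OF M] by blast
  define \<D> where "\<D> = {v_op R F | F. finite F \<and> x \<in> F \<and> F \<subseteq> M}"
  have "\<D> \<subseteq> colon R ` {colon R S | S. S \<subseteq> R \<and> x \<in> S}"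
    unfolding \<D>_def v_op_def using t_Max_subset[OF M] by blast
  then have "finite \<D>" using finite_colons_containing[OF xR x(2)] by (meson finite_imageI finite_subset)
  moreover have "\<forall>D\<in>\<D>. \<exists>F. finite F \<and> x \<in> F \<and> F \<subseteq> M \<and> D = v_op R F" unfolding \<D>_def by blast
  then obtain Fc where Fc: "\<And>D. D \<in> \<D> \<Longrightarrow> finite (Fc D) \<and> x \<in> Fc D \<and> Fc D \<subseteq> M \<and> D = v_op R (Fc D)"
    by metis
  define G where "G = insert x (\<Union>D\<in>\<D>. Fc D)"
  ultimately have G: "finite G" "G \<subseteq> M" "x \<in> G" unfolding G_def using Fc x by auto
  have "M \<subseteq> v_op R G"
  proof
    fix m assume "m \<in> M"
    then have "m \<in> t_op R M" using t_Max_t_ideal[OF M] unfolding t_ideal_def by simp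
    then obtain F a where F: "finite F" "F \<subseteq> M" "m \<in> v_op R F" by (rule mem_t_opE)
    define D where "D = v_op R (insert x F)"
    have D: "D \<in> \<D>" unfolding \<D>_def D_def using F(1,2) x(1) by blast
    have "m \<in> D" unfolding D_def using F(3) v_op_mono[of F "insert x F"] by blast
    also have "D = v_op R (Fc D)" using Fc[OF D] by blast
    also have "\<dots> \<subseteq> v_op R G" using Fc[OF D] D unfolding G_def by (intro v_op_mono) blast
    finally show "m \<in> v_op R G" .
  qed
  then have "M = v_op R G" using v_op_subset_t_ideal[OF t_Max_t_ideal[OF M] G x(2)] by blast
  then show ?thesis using v_op_idem by metis
qed

lemma t_Max_colon_not_subset:
  assumes M: "M \<in> t_Max R" obtains z where "z \<in> colon R M" "z \<notin> R"
proof -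
  have "colon R M \<noteq> R"
    using t_Max_divisorial[OF M] t_Max_neq_R[OF M] colon_R_R unfolding v_op_def by metis
  moreover have "R \<subseteq> colon R M" using t_Max_subset[OF M] unfolding colon_def by blast
  ultimately show ?thesis using that by blast
qed

lemma colon_t_Max_mult_not_subset:
  assumes M: "M \<in> t_Max R" and z: "z \<in> colon R M" "z \<notin> R"
  obtains p where "p \<in> M" "z * p \<notin> M"
proof (rule ccontr)
  assume "\<not> thesis"
  then have zM: "\<And>m. m \<in> M \<Longrightarrow> z * m \<in> M" using that by blast
  obtain x where x: "x \<in> M" "x \<noteq> 0" using t_Max_nonzero_elem[OF M] .
  have pw: "z ^ n * x \<in> M" for n
    by (induction n) (use x zM in \<open>auto simp: mult.assoc\<close>)
  txt \<open>A valuation with \<open>v(z) < 0\<close> would make \<open>v(z\<^sup>n x)\<close> negative for large \<open>n\<close>.\<close>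
  have "z \<in> V" if V: "V \<in> Vs" for V
  proof (rule ccontr)
    assume zV: "z \<notin> V"
    then have z0: "z \<noteq> 0" and vz: "val V z \<le> -1" using mem_V_iff[OF V] by auto
    have vx: "0 \<le> val V x" using val_nonneg[OF V] x t_Max_subset[OF M] by blast
    define n where "n = Suc (nat (val V x))"
    have "z ^ n * x \<in> V" "z ^ n * x \<noteq> 0" using pw t_Max_subset[OF M] R_subset_V[OF V] z0 x(2) by auto
    then have "0 \<le> val V (z ^ n * x)" using mem_V_iff[OF V] by blast
    also have "val V (z ^ n * x) = int n * val V z + val V x"
      using val_mult[OF V] int_valuation.val_power[OF val[OF V] z0] z0 x(2) by simp
    also have "\<dots> \<le> - int n + val V x" using mult_left_mono[OF vz, of "int n"] by simp
    finally show False unfolding n_def using vx by simp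
  qed
  then show False using z(2) mem_R_if_mem_V by blast
qed

lemma exists_unit_val_ge:
  assumes M: "prime_ideal_of R M" and W: "finite W" "W \<subseteq> Vs"
    and nonunit: "\<And>V. V \<in> W \<Longrightarrow> \<exists>s\<in>R. s \<notin> M \<and> inverse s \<notin> V"
  shows "\<exists>s\<in>R. s \<notin> M \<and> (\<forall>V\<in>W. val V p \<le> val V s)"
  using W nonunit
proof (induction W rule: finite_induct)
  case empty
  have "1 \<notin> M" using M ideal_eq_if_one_mem unfolding prime_ideal_of_def by blast
  then show ?case by (intro bexI[of _ 1]) auto
next
  case (insert V W)
  obtain s where s: "s \<in> R" "s \<notin> M" "\<And>V. V \<in> W \<Longrightarrow> val V p \<le> val V s"
    using insert.IH insert.prems by blast
  have V: "V \<in> Vs" using insert.prems(1) by blast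
  obtain t where t: "t \<in> R" "t \<notin> M" "inverse t \<notin> V" using insert.prems(2) by blast
  have M0: "0 \<in> M" using M ideal_zero unfolding prime_ideal_of_def by blast
  define k where "k = nat (val V p)"
  have st: "s * t ^ k \<in> R" "s * t ^ k \<notin> M"
    using s t M prime_ideal_mem_if_power_mem[OF M t(1), of k] unfolding prime_ideal_of_def by auto
  have val_st: "val W' (s * t ^ k) = val W' s + int k * val W' t" if "W' \<in> Vs" for W'
  proof -
    have "s \<noteq> 0" "t \<noteq> 0" using s(2) t(2) M0 by auto
    then show ?thesis using val_mult[OF that] int_valuation.val_power[OF val[OF that]] by simp
  qed
  have "val W' p \<le> val W' (s * t ^ k)" if W': "W' \<in> insert V W" for W'
  proof (cases "W' = V")
    case True
    have "0 \<le> val V s" using val_nonneg[OF V s(1)] s(2) M0 by auto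
    moreover have "1 \<le> val V t" using val_pos_if_inverse_notin[OF V t(3)] by simp
    then have "int k \<le> int k * val V t" using mult_left_mono[of 1 "val V t" "int k"] by simp
    moreover have "val V p \<le> int k" unfolding k_def by simp
    ultimately show ?thesis unfolding True using val_st[OF V] by linarith
  next
    case False
    then have "W' \<in> W" "W' \<in> Vs" using W' insert.prems(1) by auto
    moreover from this have "0 \<le> val W' t" using val_nonneg t(1,2) M0 by auto
    then have "0 \<le> int k * val W' t" by simp
    ultimately show ?thesis using s(3) val_st by fastforce
  qed
  then show ?case using st by blast
qed

lemma exists_V_centered_on_t_Max:
  assumes M: "M \<in> t_Max R" and p: "p \<in> M" "p \<noteq> 0"
  obtains V where "V \<in> Vs" "loc R M \<subseteq> V" "inverse p \<notin> V"
proof (rule ccontr)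
  assume "\<not> thesis"
  with that have not_centered: "\<And>V. V \<in> Vs \<Longrightarrow> inverse p \<notin> V \<Longrightarrow> \<not> loc R M \<subseteq> V"
    by blast
  have nonunit: "\<exists>s\<in>R. s \<notin> M \<and> inverse s \<notin> V" if V: "V \<in> {V\<in>Vs. inverse p \<notin> V}" for V
  proof (rule ccontr)
    assume all_units: "\<not> ?thesis"
    have "loc R M \<subseteq> V"
    proof
      fix w assume "w \<in> loc R M"
      then obtain a s where as: "a \<in> R" "s \<in> R" "s \<notin> M" "w = a / s" by (rule mem_locE)
      then have "a \<in> V" "inverse s \<in> V" using V R_subset_V all_units by auto
      then show "w \<in> V" using V_mult V as(4) by (simp add: divide_inverse)
    qed
    then show False using not_centered V by blast
  qed
  have "finite {V\<in>Vs. inverse p \<notin> V}" using finite_character p t_Max_subset[OF M] by blast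
  then have "\<exists>s\<in>R. s \<notin> M \<and> (\<forall>V\<in>{V\<in>Vs. inverse p \<notin> V}. val V p \<le> val V s)"
    by (rule exists_unit_val_ge[OF t_Max_prime[OF M] _ _ nonunit]) auto
  then obtain s where s: "s \<in> R" "s \<notin> M" "\<And>V. V \<in> Vs \<Longrightarrow> inverse p \<notin> V \<Longrightarrow> val V p \<le> val V s"
    by blast
  have s0: "s \<noteq> 0" using s(2) zero_mem_t_Max[OF M] by blast
  txt \<open>Then \<open>s / p \<in> R\<close>, making \<open>1 / p\<close> an element of \<open>R\<^sub>M\<close>.\<close>
  have "s / p \<in> V" if V: "V \<in> Vs" for V
  proof (cases "inverse p \<in> V")
    case True
    then show ?thesis using V_mult[OF V] s(1) R_subset_V[OF V] by (auto simp: divide_inverse)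
  next
    case False
    then have "0 \<le> val V (s / p)"
      using s(3) V int_valuation.val_divide[OF val[OF V] s0 p(2)] by auto
    then show ?thesis using mem_V_iff[OF V] by blast
  qed
  then have "s / p \<in> R" by (rule mem_R_if_mem_V)
  then have "(s / p) / s \<in> loc R M" using s(1,2) by (rule mem_locI)
  then show False using inverse_notin_loc[OF t_Max_ideal[OF M] p] s0 by (simp add: field_simps)
qed

context
  fixes M z p V
  assumes M: "M \<in> t_Max R" and z: "z \<in> colon R M" and p: "p \<in> M" "z * p \<notin> M"
    and V: "V \<in> Vs" "loc R M \<subseteq> V" "inverse p \<notin> V"
begin

lemma loc_factor_power:
  assumes "r \<in> loc R M" "r \<noteq> 0"
  shows "\<exists>k u. r = p ^ k * u \<and> u \<in> loc R M \<and> inverse u \<in> loc R M"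
  using assms
proof (induction "nat (val V r)" arbitrary: r rule: less_induct)
  case less
  show ?case
  proof (cases "inverse r \<in> loc R M")
    case True
    then show ?thesis using less.prems by (intro exI[of _ 0] exI[of _ r]) simp
  next
    case False
    obtain a s where as: "a \<in> R" "s \<in> R" "s \<notin> M" "r = a / s" using less.prems(1) by (rule mem_locE)
    have s0: "s \<noteq> 0" using as(3) zero_mem_t_Max[OF M] by blast
    have "a \<in> M"
    proof (rule ccontr)
      assume "a \<notin> M"
      then have "s / a \<in> loc R M" using as by (intro mem_locI)
      then show False using False as(4) by simp
    qed
    have p0: "p \<noteq> 0" and z0: "z \<noteq> 0" using p zero_mem_t_Max[OF M] by auto
    txt \<open>\<open>z p\<close> is a unit of \<open>R\<^sub>M\<close>, so \<open>r / p = z a / (z p s)\<close> stays in \<open>R\<^sub>M\<close>.\<close>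
    have "z * a \<in> R" "z * p \<in> R" using z \<open>a \<in> M\<close> p(1) unfolding colon_def by auto
    moreover have "z * p * s \<notin> M"
      using t_Max_prime[OF M] \<open>z * p \<in> R\<close> p(2) as(2,3) unfolding prime_ideal_of_def by blast
    ultimately have "(z * a) / (z * p * s) \<in> loc R M" using as(2) by (intro mem_locI) auto
    moreover have "(z * a) / (z * p * s) = r / p" using as(4) z0 p0 s0 by (simp add: field_simps)
    ultimately have rp: "r / p \<in> loc R M" "r / p \<noteq> 0" using less.prems(2) p0 by auto
    have "1 \<le> val V p" using val_pos_if_inverse_notin[OF V(1,3)] by simp
    moreover have "val V (r / p) = val V r - val V p"
      using int_valuation.val_divide[OF val[OF V(1)] less.prems(2) p0] .
    moreover have "0 \<le> val V (r / p)" using rp V(2) mem_V_iff[OF V(1)] by blast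
    ultimately have "nat (val V (r / p)) < nat (val V r)" by linarith
    then obtain k u where "r / p = p ^ k * u" "u \<in> loc R M" "inverse u \<in> loc R M"
      using less.hyps rp by blast
    moreover from this have "r = p ^ Suc k * u" using p0 by (simp add: field_simps)
    ultimately show ?thesis by blast
  qed
qed

lemma factor_power_unit:
  assumes r: "r \<in> R" "r \<noteq> 0"
  obtains k u where "r = p ^ k * u" "u \<in> loc R M" "inverse u \<in> loc R M" "val V r = int k * val V p"
proof -
  have p0: "p \<noteq> 0" using p zero_mem_t_Max[OF M] by auto
  have "r \<in> loc R M" using R_subset_loc[OF one_notin_t_Max[OF M]] r(1) by blast
  then obtain k u where ku: "r = p ^ k * u" "u \<in> loc R M" "inverse u \<in> loc R M"
    using loc_factor_power r(2) by blast
  then have "u \<noteq> 0" "0 \<le> val V u" "0 \<le> val V (inverse u)"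
    using r(2) V(2) mem_V_iff[OF V(1)] by auto
  then have "val V u = 0" using int_valuation.val_inverse[OF val[OF V(1)] \<open>u \<noteq> 0\<close>] by linarith
  then have "val V r = int k * val V p"
    using ku(1) val_mult[OF V(1)] int_valuation.val_power[OF val[OF V(1)] p0] \<open>u \<noteq> 0\<close> p0 by simp
  then show ?thesis using ku that by blast
qed

lemma loc_t_Max_eq_V: "loc R M = V"
proof
  show "loc R M \<subseteq> V" by (rule V(2))
  have M1: "1 \<notin> M" and Mp: "prime_ideal_of R M" using M one_notin_t_Max t_Max_prime by auto
  have p0: "p \<noteq> 0" and vp: "1 \<le> val V p"
    using p zero_mem_t_Max[OF M] val_pos_if_inverse_notin[OF V(1,3)] by auto
  show "V \<subseteq> loc R M"
  proof
    fix w assume w: "w \<in> V"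
    show "w \<in> loc R M"
    proof (cases "w = 0")
      case True
      then show ?thesis using R_subset_loc[OF M1] by auto
    next
      case False
      obtain a b where ab: "a \<in> R" "b \<in> R" "b \<noteq> 0" "w = a / b" by (rule obtain_fraction)
      then have a0: "a \<noteq> 0" using False by auto
      obtain i u where iu: "a = p ^ i * u" "u \<in> loc R M" "val V a = int i * val V p"
        using factor_power_unit[OF ab(1) a0] by blast
      obtain j u' where ju: "b = p ^ j * u'" "inverse u' \<in> loc R M" "val V b = int j * val V p"
        using factor_power_unit[OF ab(2,3)] by blast
      have "0 \<le> val V w" using w False mem_V_iff[OF V(1)] by blast
      also have "val V w = int i * val V p - int j * val V p"
        using ab(4) iu(3) ju(3) int_valuation.val_divide[OF val[OF V(1)] a0 ab(3)] by simp
      finally have "j \<le> i" using vp by (simp add: mult_le_cancel_right)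
      then have "w = p ^ (i - j) * (u * inverse u')"
        using ab(3,4) iu(1) ju(1) p0 by (simp add: field_simps power_diff)
      moreover have "p ^ (i - j) \<in> loc R M"
        using R_subset_loc[OF M1] p(1) t_Max_subset[OF M] power_mem by blast
      ultimately show ?thesis using loc_mult[OF Mp] iu(2) ju(2) by simp
    qed
  qed
qed

end

lemma dvr_loc_t_Max: assumes M: "M \<in> t_Max R" shows "dvr (loc R M)"
proof -
  obtain z where z: "z \<in> colon R M" "z \<notin> R" using t_Max_colon_not_subset[OF M] .
  obtain p where p: "p \<in> M" "z * p \<notin> M" using colon_t_Max_mult_not_subset[OF M z] .
  then have "p \<noteq> 0" using zero_mem_t_Max[OF M] by auto
  then obtain V where V: "V \<in> Vs" "loc R M \<subseteq> V" "inverse p \<notin> V"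
    using exists_V_centered_on_t_Max[OF M p(1)] by blast
  then show ?thesis using loc_t_Max_eq_V[OF M z(1) p V] dvr_V by simp
qed

lemma krull_family_t_sharp: "t_sharp R"
  unfolding t_sharp_iff_separating
proof
  fix M assume M: "M \<in> t_Max R"
  obtain z where "z \<in> colon R M" "z \<notin> R" using t_Max_colon_not_subset[OF M] .
  then show "\<exists>y. (\<forall>N\<in>t_Max R - {M}. y \<in> loc R N) \<and> y \<notin> loc R M"
    using colon_t_Max_separating[OF M] by blast
qed

end

context fraction_domain
begin

lemma krull_imp_almost_krull_t_sharp:
  assumes "krull R" shows "almost_krull R \<and> t_sharp R"
proof -
  obtain Vs where Vs: "\<And>V. V \<in> Vs \<Longrightarrow> dvr V" "R = \<Inter>Vs"
    "\<And>x. x \<in> R \<Longrightarrow> x \<noteq> 0 \<Longrightarrow> finite {V\<in>Vs. inverse x \<notin> V}"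
    using assms unfolding krull_def by blast
  have "\<forall>V\<in>Vs. \<exists>v. int_valuation v \<and> V = {x. x = 0 \<or> 0 \<le> v x}"
    using Vs(1) dvrE by metis
  then obtain val where val: "\<And>V. V \<in> Vs \<Longrightarrow> int_valuation (val V) \<and> V = {x. x = 0 \<or> 0 \<le> val V x}"
    by metis
  interpret krull_family R Vs val
    by (intro krull_family.intro fraction_domain_axioms krull_family_axioms.intro) (use Vs val in auto)
  show ?thesis unfolding almost_krull_def using dvr_loc_t_Max krull_family_t_sharp by blast
qed

end

theorem theorem1p17:
  fixes R :: "'a::field set"
  assumes "subring R" and "quotient_field_is_UNIV R" and "R \<noteq> UNIV"
  shows "(almost_krull R \<and> t_sharp R \<longleftrightarrow> almost_krull R \<and> t_sharp_sharp R)
       \<and> (almost_krull R \<and> t_sharp_sharp R \<longleftrightarrow> krull R)"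
proof -
  interpret fraction_domain R using assms by unfold_locales
  show ?thesis
    using almost_krull_t_sharp_iff_t_sharp_sharp almost_krull_t_sharp_imp_krull
      krull_imp_almost_krull_t_sharp by blast
qed

end
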